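(* Let $f,g_1,\dots,g_m,h_1,\dots,h_l\in\mathbb{R}[\mathbf{x}]$ and consider the POP of minimizing $f$ over $S(g)\cap V(h)$. If $R-\|\mathbf{x}\|_2^2\in\{g_1,\dots,g_m\}$ for some $R>0$, then $(0,\infty)\subseteq Q_k^\circ(g)$ for every integer $k\ge k_{\min}$, and therefore the POP has the constant trace property (CTP).
   Context: $\mathbf{x}=(x_1,\dots,x_n)$; for $p\in\mathbb{R}[\mathbf{x}]$, $\lceil p\rceil:=\lceil\deg(p)/2\rceil$. $\mathbb{N}^n_d:=\{\alpha\in\mathbb{N}^n:|\alpha|\le d\}$, $s(d):=\binom{n+d}{n}$, $\mathbf{v}_d=(\mathbf{x}^\alpha)_{\alpha\in\mathbb{N}^n_d}$. $g=\{g_i\}_{i\in[m]}$, $h=\{h_j\}_{j\in[l]}$, $S(g):=\{\mathbf{x}:g_i(\mathbf{x})\ge0\ \forall i\}$, $V(h):=\{\mathbf{x}:h_j(\mathbf{x})=0\ \forall j\}$, $k_{\min}:=\max\{\lceil f\rceil,\lceil g_i\rceil,\lceil h_j\rceil\}$. $Q_k^\circ(g):=\{\mathbf{v}_k^\top\mathbf{G}_0\mathbf{v}_k+\sum_{i\in[m]}g_i\mathbf{v}_{k-\lceil g_i\rceil}^\top\mathbf{G}_i\mathbf{v}_{k-\lceil g_i\rceil}:\ \mathbf{G}_i\succ0\}$ (all $\mathbf{G}_i$ real symmetric positive definite). For $\mathbf{y}=(y_\alpha)_{\alpha\in\mathbb{N}^n_{2k}}$: $\mathbf{M}_d(\mathbf{y})=(y_{\alpha+\beta})_{\alpha,\beta\in\mathbb{N}^n_d}$,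 and for $q=\sum_\gamma q_\gamma\mathbf{x}^\gamma$, $\mathbf{M}_d(q\mathbf{y})=(\sum_\gamma q_\gamma y_{\alpha+\beta+\gamma})_{\alpha,\beta\in\mathbb{N}^n_d}$. $\mathcal{S}_k$: real symmetric block-diagonal matrices $\mathrm{diag}(\mathbf{X}_0,\dots,\mathbf{X}_m)$ with $\mathbf{X}_0$ of size $s(k)$, $\mathbf{X}_i$ of size $s(k-\lceil g_i\rceil)$. $\mathbf{D}_k(\mathbf{y}):=\mathrm{diag}(\mathbf{M}_k(\mathbf{y}),\mathbf{M}_{k-\lceil g_1\rceil}(g_1\mathbf{y}),\dots,\mathbf{M}_{k-\lceil g_m\rceil}(g_m\mathbf{y}))$. CTP: for every integer $k\ge k_{\min}$ there exist $a_k>0$ and a positive definite $\mathbf{P}_k\in\mathcal{S}_k$ such that every $\mathbf{y}\in\mathbb{R}^{s(2k)}$ with $\mathbf{M}_{k-\lceil h_j\rceil}(h_j\mathbf{y})=0$ ($j\in[l]$) and $y_{\mathbf{0}}=1$ satisfies $\mathrm{trace}(\mathbf{P}_k\mathbf{D}_k(\mathbf{y})\mathbf{P}_k)=a_k$. *)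

theory Defs
  imports Complex_Main
begin

text \<open>
Multivariate real polynomials in the variables x_0, ..., x_(n-1) are represented by their
coefficient functions: a monomial (exponent vector) is a function  alpha :: nat => nat
(with alpha i = 0 for i >= n), and a polynomial is a function from exponent vectors to
real coefficients with finitely many nonzero coefficients, all on exponent vectors in n variables.
\<close>

type_synonym mono = "nat \<Rightarrow> nat"
type_synonym rpoly = "mono \<Rightarrow> real"

definition mdeg :: "nat \<Rightarrow> mono \<Rightarrow> nat" where
  "mdeg n \<alpha> = (\<Sum>i<n. \<alpha> i)"

definition Nmon :: "nat \<Rightarrow> nat \<Rightarrow> mono set" where
  "Nmon n d = {\<alpha>. (\<forall>i\<ge>n. \<alpha> i = 0) \<and> mdeg n \<alpha> \<le> d}"

definition zero_mono :: mono where
  "zero_mono = (\<lambda>_. 0)"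

definition is_poly :: "nat \<Rightarrow> rpoly \<Rightarrow> bool" where
  "is_poly n p \<longleftrightarrow> (\<exists>d. \<forall>\<alpha>. p \<alpha> \<noteq> 0 \<longrightarrow> \<alpha> \<in> Nmon n d)"

definition pdeg :: "nat \<Rightarrow> rpoly \<Rightarrow> nat" where
  "pdeg n p = (if {\<alpha>. p \<alpha> \<noteq> 0} = {} then 0 else Max (mdeg n ` {\<alpha>. p \<alpha> \<noteq> 0}))"

definition hdeg :: "nat \<Rightarrow> rpoly \<Rightarrow> nat" where
  "hdeg n p = nat \<lceil>real (pdeg n p) / 2\<rceil>"

definition pmul :: "rpoly \<Rightarrow> rpoly \<Rightarrow> rpoly" where
  "pmul p q = (\<lambda>\<gamma>. \<Sum>\<alpha>\<in>{\<alpha>. \<forall>i. \<alpha> i \<le> \<gamma> i}. p \<alpha> * q (\<lambda>i. \<gamma> i - \<alpha> i))"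

definition pconst :: "real \<Rightarrow> rpoly" where
  "pconst c = (\<lambda>\<alpha>. if \<alpha> = zero_mono then c else 0)"

text \<open>The polynomial R - ||x||_2^2 = R - sum_j x_j^2 in n variables.\<close>
definition ball_poly :: "nat \<Rightarrow> real \<Rightarrow> rpoly" where
  "ball_poly n R = (\<lambda>\<alpha>. if \<alpha> = zero_mono then R
      else if (\<exists>j<n. \<alpha> = (\<lambda>i. if i = j then 2 else 0)) then -1 else 0)"

text \<open>Matrices indexed by N^n_d: functions mono => mono => real; only entries on
  Nmon n d matter. Real symmetric positive definite matrix of size s(d).\<close>
definition pos_def :: "nat \<Rightarrow> nat \<Rightarrow> (mono \<Rightarrow> mono \<Rightarrow> real) \<Rightarrow> bool" where
  "pos_def n d G \<longleftrightarrow>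
     (\<forall>\<alpha>\<in>Nmon n d. \<forall>\<beta>\<in>Nmon n d. G \<alpha> \<beta> = G \<beta> \<alpha>) \<and>
     (\<forall>u :: mono \<Rightarrow> real. (\<exists>\<alpha>\<in>Nmon n d. u \<alpha> \<noteq> 0) \<longrightarrow>
         (\<Sum>\<alpha>\<in>Nmon n d. \<Sum>\<beta>\<in>Nmon n d. u \<alpha> * G \<alpha> \<beta> * u \<beta>) > 0)"

text \<open>The polynomial v_d^T G v_d.\<close>
definition gram_poly :: "nat \<Rightarrow> nat \<Rightarrow> (mono \<Rightarrow> mono \<Rightarrow> real) \<Rightarrow> rpoly" where
  "gram_poly n d G = (\<lambda>\<gamma>. \<Sum>\<alpha>\<in>Nmon n d. \<Sum>\<beta>\<in>Nmon n d.
      if (\<lambda>i. \<alpha> i + \<beta> i) = \<gamma> then G \<alpha> \<beta> else 0)"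

definition Qcirc :: "nat \<Rightarrow> nat \<Rightarrow> (nat \<Rightarrow> rpoly) \<Rightarrow> nat \<Rightarrow> rpoly set" where
  "Qcirc n m g k = {p. \<exists>G0 G. pos_def n k G0 \<and> (\<forall>i<m. pos_def n (k - hdeg n (g i)) (G i)) \<and>
      p = (\<lambda>\<gamma>. gram_poly n k G0 \<gamma> +
              (\<Sum>i<m. pmul (g i) (gram_poly n (k - hdeg n (g i)) (G i)) \<gamma>))}"

definition kmin :: "nat \<Rightarrow> rpoly \<Rightarrow> nat \<Rightarrow> (nat \<Rightarrow> rpoly) \<Rightarrow> nat \<Rightarrow> (nat \<Rightarrow> rpoly) \<Rightarrow> nat" where
  "kmin n f m g l h = Max ({hdeg n f} \<union> hdeg n ` g ` {..<m} \<union> hdeg n ` h ` {..<l})"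

definition loc_mat :: "nat \<Rightarrow> rpoly \<Rightarrow> (mono \<Rightarrow> real) \<Rightarrow> mono \<Rightarrow> mono \<Rightarrow> real" where
  "loc_mat n q y = (\<lambda>\<alpha> \<beta>. \<Sum>\<gamma>\<in>{\<gamma>. q \<gamma> \<noteq> 0}. q \<gamma> * y (\<lambda>i. \<alpha> i + \<beta> i + \<gamma> i))"

definition mom_mat :: "(mono \<Rightarrow> real) \<Rightarrow> mono \<Rightarrow> mono \<Rightarrow> real" where
  "mom_mat y = (\<lambda>\<alpha> \<beta>. y (\<lambda>i. \<alpha> i + \<beta> i))"

definition trace_XMX :: "nat \<Rightarrow> nat \<Rightarrow> (mono \<Rightarrow> mono \<Rightarrow> real) \<Rightarrow> (mono \<Rightarrow> mono \<Rightarrow> real) \<Rightarrow> real" where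
  "trace_XMX n d X M = (\<Sum>\<alpha>\<in>Nmon n d. \<Sum>\<beta>\<in>Nmon n d. \<Sum>\<gamma>\<in>Nmon n d. X \<alpha> \<beta> * M \<beta> \<gamma> * X \<gamma> \<alpha>)"

text \<open>Constant trace property. P_k = diag(X_0, ..., X_m) is positive definite iff every block
  is; trace(P_k D_k(y) P_k) is the sum of the blockwise traces.\<close>
definition CTP :: "nat \<Rightarrow> rpoly \<Rightarrow> nat \<Rightarrow> (nat \<Rightarrow> rpoly) \<Rightarrow> nat \<Rightarrow> (nat \<Rightarrow> rpoly) \<Rightarrow> bool" where
  "CTP n f m g l h \<longleftrightarrow> (\<forall>k\<ge>kmin n f m g l h. \<exists>a>0. \<exists>X0 X.
     pos_def n k X0 \<and> (\<forall>i<m. pos_def n (k - hdeg n (g i)) (X i)) \<and>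
     (\<forall>y :: mono \<Rightarrow> real.
        (\<forall>j<l. \<forall>\<alpha>\<in>Nmon n (k - hdeg n (h j)). \<forall>\<beta>\<in>Nmon n (k - hdeg n (h j)).
            loc_mat n (h j) y \<alpha> \<beta> = 0) \<and> y zero_mono = 1 \<longrightarrow>
        trace_XMX n k X0 (mom_mat y) +
        (\<Sum>i<m. trace_XMX n (k - hdeg n (g i)) (X i) (loc_mat n (g i) y)) = a))"

end

(*
  Since R - |x|^2 is one of the constraints, every c > 0 has the explicit diagonal certificate
    c = sum_b a_b x^(2b) + (R - |x|^2) sum_b e_b x^(2b),   e_b = c/(2R) (2R)^(-|b|),
  with all a_b > 0: the geometric decay of e makes R e_b at most half of e_(b - u_j) whenever
  b_j > 0 (u_j the j-th unit exponent). Give every other constraint g_i the Gram matrix t I. The polynomial these contribute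
  has degree at most 2k, so it is t times the Gram polynomial of a symmetric matrix E, and it is
  cancelled by replacing diag(a) with diag(a) - t E. For small t this matrix has a positive
  definite symmetric square root, the fixed point of a contraction. Hence every c > 0 has a
  certificate in which all Gram matrices are squares X_i^2 of positive definite X_i.
  Since trace(X M X) = <M, X^2>, for P = diag(X_0, ..., X_m) the trace of P D_k(y) P is the
  Riesz functional of y applied to the certificate of 1, which is y_0 = 1. This is CTP with a_k = 1.
*)
theory Submission
  imports Defs "HOL-Analysis.Convex"
begin

abbreviation mono_add :: "mono \<Rightarrow> mono \<Rightarrow> mono" (infixl "\<oplus>" 65) where
  "\<alpha> \<oplus> \<beta> \<equiv> (\<lambda>i. \<alpha> i + \<beta> i)"

definition mono_single :: "nat \<Rightarrow> nat \<Rightarrow> mono" where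
  "mono_single j c = (\<lambda>i. if i = j then c else 0)"

definition finite_supp :: "mono \<Rightarrow> bool" where
  "finite_supp \<gamma> \<longleftrightarrow> finite {i. \<gamma> i \<noteq> 0}"

definition diagm :: "(mono \<Rightarrow> real) \<Rightarrow> mono \<Rightarrow> mono \<Rightarrow> real" where
  "diagm e = (\<lambda>\<alpha> \<beta>. if \<alpha> = \<beta> then e \<alpha> else 0)"

lemma finite_Nmon: "finite (Nmon n d)"
proof -
  let ?F = "{f. \<forall>x. (x \<in> {..<n} \<longrightarrow> f x \<in> {0..d}) \<and> (x \<notin> {..<n} \<longrightarrow> f x = 0)}"
  have "\<alpha> x \<le> d" if "\<alpha> \<in> Nmon n d" "x < n" for \<alpha> x
    using that member_le_sum[of x "{..<n}" \<alpha>] by (auto simp: Nmon_def mdeg_def)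
  then have "Nmon n d \<subseteq> ?F"
    by (auto simp: Nmon_def)
  moreover have "finite ?F"
    by (rule finite_set_of_finite_funs) auto
  ultimately show ?thesis
    by (rule finite_subset)
qed

lemma zero_mono_in_Nmon [simp]: "zero_mono \<in> Nmon n d"
  by (simp add: Nmon_def zero_mono_def mdeg_def)

lemma Nmon_nonempty [simp]: "Nmon n d \<noteq> {}"
  using zero_mono_in_Nmon by blast

lemma mdeg_zero_mono [simp]: "mdeg n zero_mono = 0"
  by (simp add: mdeg_def zero_mono_def)

lemma mdeg_add: "mdeg n (\<alpha> \<oplus> \<beta>) = mdeg n \<alpha> + mdeg n \<beta>"
  by (simp add: mdeg_def sum.distrib)

lemma Nmon_add: "\<alpha> \<in> Nmon n a \<Longrightarrow> \<beta> \<in> Nmon n b \<Longrightarrow> \<alpha> \<oplus> \<beta> \<in> Nmon n (a + b)"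
  by (auto simp: Nmon_def mdeg_add)

lemma Nmon_mono: "a \<le> b \<Longrightarrow> Nmon n a \<subseteq> Nmon n b"
  by (auto simp: Nmon_def)

lemma Nmon_finite_supp: "\<alpha> \<in> Nmon n d \<Longrightarrow> finite_supp \<alpha>"
  unfolding finite_supp_def Nmon_def
  by (rule finite_subset[of _ "{..<n}"]) (auto simp: not_less[symmetric])

lemma mdeg_mono_single: "j < n \<Longrightarrow> mdeg n (mono_single j c) = c"
  by (simp add: mdeg_def mono_single_def)

lemma mono_single_in_Nmon: "j < n \<Longrightarrow> mono_single j 1 \<in> Nmon n 1"
  by (simp add: Nmon_def mdeg_mono_single) (simp add: mono_single_def)

lemma mono_single_split:
  "0 < \<gamma> j \<Longrightarrow> \<gamma> = (\<lambda>i. \<gamma> i - mono_single j 1 i) \<oplus> mono_single j 1"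
  by (auto simp: mono_single_def fun_eq_iff)

lemma Nmon_pos_coord:
  assumes "\<gamma> \<in> Nmon n d" and "\<gamma> \<noteq> zero_mono"
  obtains j where "j < n" and "0 < \<gamma> j"
proof -
  obtain j where "\<gamma> j \<noteq> 0"
    using assms(2) by (auto simp: zero_mono_def fun_eq_iff)
  moreover have "j < n"
    using assms(1) calculation by (auto simp: Nmon_def not_less[symmetric])
  ultimately show thesis
    using that by simp
qed

lemma mdeg_minus_single:
  assumes "j < n" and "0 < \<gamma> j"
  shows "mdeg n \<gamma> = mdeg n (\<lambda>i. \<gamma> i - mono_single j 1 i) + 1"
proof -
  let ?\<gamma>' = "\<lambda>i. \<gamma> i - mono_single j 1 i"
  show ?thesis
    using mono_single_split[of \<gamma> j] assms(2) mdeg_add[of n ?\<gamma>' "mono_single j 1"]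
    by (simp add: mdeg_mono_single[OF assms(1)])
qed

lemma Nmon_minus_single:
  assumes "\<gamma> \<in> Nmon n (Suc d)" and "j < n" and "0 < \<gamma> j"
  shows "(\<lambda>i. \<gamma> i - mono_single j 1 i) \<in> Nmon n d"
  using assms mdeg_minus_single[of j n \<gamma>] by (auto simp: Nmon_def)

lemma Nmon_split:
  "\<gamma> \<in> Nmon n (a + b) \<Longrightarrow> \<exists>\<alpha>\<in>Nmon n a. \<exists>\<beta>\<in>Nmon n b. \<gamma> = \<alpha> \<oplus> \<beta>"
proof (induction a arbitrary: \<gamma>)
  case 0
  have "\<gamma> = zero_mono \<oplus> \<gamma>"
    by (simp add: zero_mono_def)
  then show ?case
    using "0" by (metis add_0 zero_mono_in_Nmon)
next
  case (Suc a)
  show ?case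
  proof (cases "\<gamma> \<in> Nmon n b")
    case True
    have "\<gamma> = zero_mono \<oplus> \<gamma>"
      by (simp add: zero_mono_def)
    then show ?thesis
      using True zero_mono_in_Nmon by blast
  next
    case False
    then have "\<gamma> \<noteq> zero_mono"
      by auto
    with Suc.prems obtain j where j: "j < n" "0 < \<gamma> j"
      by (rule Nmon_pos_coord)
    have "(\<lambda>i. \<gamma> i - mono_single j 1 i) \<in> Nmon n (a + b)"
      using Nmon_minus_single[of \<gamma> n "a + b" j] Suc.prems j by simp
    then obtain \<alpha> \<beta> where \<alpha>: "\<alpha> \<in> Nmon n a" and \<beta>: "\<beta> \<in> Nmon n b"
      and eq: "(\<lambda>i. \<gamma> i - mono_single j 1 i) = \<alpha> \<oplus> \<beta>"
      using Suc.IH by blast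
    show ?thesis
    proof (intro bexI)
      show "\<gamma> = (\<alpha> \<oplus> mono_single j 1) \<oplus> \<beta>"
        using mono_single_split[of \<gamma> j] j(2) eq by (simp add: fun_eq_iff)
      show "\<alpha> \<oplus> mono_single j 1 \<in> Nmon n (Suc a)"
        using Nmon_add[OF \<alpha> mono_single_in_Nmon[OF j(1)]] by simp
    qed (rule \<beta>)
  qed
qed

lemma finite_below: "finite_supp \<gamma> \<Longrightarrow> finite {\<alpha>. \<forall>i. \<alpha> i \<le> \<gamma> i}"
proof -
  let ?S = "{i. \<gamma> i \<noteq> 0}"
  let ?F = "{f. \<forall>x. (x \<in> ?S \<longrightarrow> f x \<in> (\<Union>y\<in>?S. {0..\<gamma> y})) \<and> (x \<notin> ?S \<longrightarrow> f x = 0)}"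
  assume "finite_supp \<gamma>"
  then have "finite ?F"
    by (intro finite_set_of_finite_funs) (auto simp: finite_supp_def)
  moreover have "{\<alpha>. \<forall>i. \<alpha> i \<le> \<gamma> i} \<subseteq> ?F"
    by auto (metis le_zero_eq)
  ultimately show ?thesis
    using finite_subset by blast
qed

text \<open>At a monomial of infinite support, the defining sum of \<^const>\<open>pmul\<close> ranges over an
  infinite set, hence is 0.\<close>
lemma pmul_not_finite_supp:
  assumes "\<not> finite_supp \<gamma>"
  shows "pmul p q \<gamma> = 0"
proof -
  have inj: "inj_on (\<lambda>j. mono_single j 1) {i. \<gamma> i \<noteq> 0}"
    by (rule inj_onI) (metis mono_single_def zero_neq_one)
  have "(\<lambda>j. mono_single j 1) ` {i. \<gamma> i \<noteq> 0} \<subseteq> {\<alpha>. \<forall>i. \<alpha> i \<le> \<gamma> i}"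
    by (auto simp: mono_single_def)
  then have "infinite {\<alpha>. \<forall>i. \<alpha> i \<le> \<gamma> i}"
    using assms inj finite_imageD finite_subset unfolding finite_supp_def by blast
  then show ?thesis
    by (simp add: pmul_def)
qed

lemma pmul_eq_sum_supp:
  assumes "finite_supp \<gamma>" and "finite S" and "\<And>\<alpha>. p \<alpha> \<noteq> 0 \<Longrightarrow> \<alpha> \<in> S"
  shows "pmul p q \<gamma> = (\<Sum>\<alpha>\<in>S. if \<forall>i. \<alpha> i \<le> \<gamma> i then p \<alpha> * q (\<lambda>i. \<gamma> i - \<alpha> i) else 0)"
proof -
  let ?T = "{\<alpha>. \<forall>i. \<alpha> i \<le> \<gamma> i}"
  have "pmul p q \<gamma> = (\<Sum>\<alpha>\<in>?T \<inter> S. p \<alpha> * q (\<lambda>i. \<gamma> i - \<alpha> i))"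
    unfolding pmul_def
    by (rule sum.mono_neutral_right) (use finite_below[OF assms(1)] assms(3) in auto)
  also have "\<dots> = (\<Sum>\<alpha>\<in>S. if \<forall>i. \<alpha> i \<le> \<gamma> i then p \<alpha> * q (\<lambda>i. \<gamma> i - \<alpha> i) else 0)"
    using assms(2) by (simp add: sum.inter_filter[symmetric] Int_def conj_commute)
  finally show ?thesis .
qed

lemma pmul_scale_right: "pmul p (\<lambda>\<gamma>. t * q \<gamma>) \<gamma> = t * pmul p q \<gamma>"
  unfolding pmul_def by (simp add: sum_distrib_left mult_ac)

lemma is_poly_finite_supp: "is_poly n p \<Longrightarrow> finite {\<alpha>. p \<alpha> \<noteq> 0}"
proof -
  assume "is_poly n p"
  then obtain d where "{\<alpha>. p \<alpha> \<noteq> 0} \<subseteq> Nmon n d"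
    by (auto simp: is_poly_def)
  then show ?thesis
    using finite_Nmon finite_subset by blast
qed

lemma is_poly_supp_Nmon:
  assumes "is_poly n p" and "p \<alpha> \<noteq> 0"
  shows "\<alpha> \<in> Nmon n (pdeg n p)"
proof -
  obtain d where d: "\<forall>\<alpha>. p \<alpha> \<noteq> 0 \<longrightarrow> \<alpha> \<in> Nmon n d"
    using assms(1) by (auto simp: is_poly_def)
  have "mdeg n \<alpha> \<le> Max (mdeg n ` {\<alpha>. p \<alpha> \<noteq> 0})"
    using is_poly_finite_supp[OF assms(1)] assms(2) by (intro Max_ge) auto
  then show ?thesis
    using d assms(2) by (auto simp: pdeg_def Nmon_def)
qed

lemma pdeg_le_hdeg: "pdeg n p \<le> 2 * hdeg n p"
proof -
  have "real (pdeg n p) / 2 \<le> of_int \<lceil>real (pdeg n p) / 2\<rceil>"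
    by (rule le_of_int_ceiling)
  then show ?thesis
    unfolding hdeg_def by linarith
qed

lemma pdeg_plus_twice_le: "hdeg n p \<le> k \<Longrightarrow> pdeg n p + 2 * (k - hdeg n p) \<le> 2 * k"
  using pdeg_le_hdeg[of n p] by simp

lemma gram_poly_supp:
  assumes "gram_poly n d G \<gamma> \<noteq> 0"
  shows "\<gamma> \<in> Nmon n (2 * d)"
proof -
  obtain \<alpha> where \<alpha>: "\<alpha> \<in> Nmon n d"
    and ne: "(\<Sum>\<beta>\<in>Nmon n d. if \<alpha> \<oplus> \<beta> = \<gamma> then G \<alpha> \<beta> else 0) \<noteq> 0"
    using assms unfolding gram_poly_def by (rule sum.not_neutral_contains_not_neutral)
  from ne obtain \<beta> where "\<beta> \<in> Nmon n d" and "(if \<alpha> \<oplus> \<beta> = \<gamma> then G \<alpha> \<beta> else 0) \<noteq> 0"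
    by (rule sum.not_neutral_contains_not_neutral)
  with \<alpha> have "\<alpha> \<in> Nmon n d" "\<beta> \<in> Nmon n d" "\<alpha> \<oplus> \<beta> = \<gamma>"
    by (auto split: if_splits)
  then show ?thesis
    using Nmon_add[of \<alpha> n d \<beta> d] by (simp add: mult_2)
qed

lemma pmul_gram_poly_supp:
  assumes "is_poly n p" and "pmul p (gram_poly n d G) \<gamma> \<noteq> 0"
  shows "\<gamma> \<in> Nmon n (pdeg n p + 2 * d)"
proof -
  have "finite_supp \<gamma>"
    using assms(2) pmul_not_finite_supp by blast
  then have "(\<Sum>\<alpha>\<in>{\<alpha>. p \<alpha> \<noteq> 0}. if \<forall>i. \<alpha> i \<le> \<gamma> i
      then p \<alpha> * gram_poly n d G (\<lambda>i. \<gamma> i - \<alpha> i) else 0) \<noteq> 0"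
    using assms(2) pmul_eq_sum_supp[OF _ is_poly_finite_supp[OF assms(1)]] by simp
  then obtain \<alpha> where "\<alpha> \<in> {\<alpha>. p \<alpha> \<noteq> 0}"
    and "(if \<forall>i. \<alpha> i \<le> \<gamma> i then p \<alpha> * gram_poly n d G (\<lambda>i. \<gamma> i - \<alpha> i) else 0) \<noteq> 0"
    by (rule sum.not_neutral_contains_not_neutral)
  then have "p \<alpha> \<noteq> 0" "\<forall>i. \<alpha> i \<le> \<gamma> i" "gram_poly n d G (\<lambda>i. \<gamma> i - \<alpha> i) \<noteq> 0"
    by (auto split: if_splits)
  then have "\<alpha> \<oplus> (\<lambda>i. \<gamma> i - \<alpha> i) \<in> Nmon n (pdeg n p + 2 * d)"
    by (intro Nmon_add is_poly_supp_Nmon[OF assms(1)] gram_poly_supp)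
  moreover have "\<alpha> \<oplus> (\<lambda>i. \<gamma> i - \<alpha> i) = \<gamma>"
    using \<open>\<forall>i. \<alpha> i \<le> \<gamma> i\<close> by auto
  ultimately show ?thesis
    by simp
qed

lemma gram_poly_lincomb:
  "gram_poly n d (\<lambda>\<alpha> \<beta>. A \<alpha> \<beta> + t * B \<alpha> \<beta>) \<gamma> = gram_poly n d A \<gamma> + t * gram_poly n d B \<gamma>"
  unfolding gram_poly_def sum_distrib_left sum.distrib[symmetric] by (intro sum.cong refl) simp

lemma gram_poly_cong:
  "(\<And>\<alpha> \<beta>. \<alpha> \<in> Nmon n d \<Longrightarrow> \<beta> \<in> Nmon n d \<Longrightarrow> A \<alpha> \<beta> = B \<alpha> \<beta>) \<Longrightarrow>
    gram_poly n d A = gram_poly n d B"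
  unfolding gram_poly_def by (intro ext sum.cong refl) auto

lemma double_mono_iff: "\<beta> \<oplus> \<beta> = \<gamma> \<longleftrightarrow> (\<forall>i. even (\<gamma> i)) \<and> \<beta> = (\<lambda>i. \<gamma> i div 2)"
proof
  show "\<beta> \<oplus> \<beta> = \<gamma> \<Longrightarrow> (\<forall>i. even (\<gamma> i)) \<and> \<beta> = (\<lambda>i. \<gamma> i div 2)"
    by auto
  show "\<beta> \<oplus> \<beta> = \<gamma>" if "(\<forall>i. even (\<gamma> i)) \<and> \<beta> = (\<lambda>i. \<gamma> i div 2)"
  proof
    fix i
    have "\<beta> i = \<gamma> i div 2" "2 * (\<gamma> i div 2) = \<gamma> i"
      using that by auto
    then show "\<beta> i + \<beta> i = \<gamma> i"
      by simp
  qed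
qed

lemma gram_poly_diagm:
  "gram_poly n d (diagm e) \<gamma> =
     (if (\<forall>i. even (\<gamma> i)) \<and> (\<lambda>i. \<gamma> i div 2) \<in> Nmon n d then e (\<lambda>i. \<gamma> i div 2) else 0)"
proof -
  have "gram_poly n d (diagm e) \<gamma> =
      (\<Sum>\<beta>\<in>Nmon n d. \<Sum>\<beta>'\<in>Nmon n d. if \<beta>' = \<beta> then (if \<beta> \<oplus> \<beta> = \<gamma> then e \<beta> else 0) else 0)"
    unfolding gram_poly_def diagm_def by (intro sum.cong refl) auto
  also have "\<dots> = (\<Sum>\<beta>\<in>Nmon n d. if \<beta> \<oplus> \<beta> = \<gamma> then e \<beta> else 0)"
    by (simp add: finite_Nmon)
  also have "\<dots> = (\<Sum>\<beta>\<in>Nmon n d.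
      if \<beta> = (\<lambda>i. \<gamma> i div 2) then (if \<forall>i. even (\<gamma> i) then e \<beta> else 0) else 0)"
    by (simp only: double_mono_iff if_if_eq_conj conj_commute)
  finally show ?thesis
    by (simp add: finite_Nmon)
qed

lemma gram_poly_diagm_const:
  "gram_poly n d (diagm (\<lambda>_. t)) = (\<lambda>\<gamma>. t * gram_poly n d (diagm (\<lambda>_. 1)) \<gamma>)"
  by (simp add: gram_poly_diagm fun_eq_iff)

text \<open>Spread each coefficient q \<gamma> evenly over the pairs (\<alpha>, \<beta>) in N^n_k with \<alpha> + \<beta> = \<gamma>.\<close>
lemma gram_poly_exists:
  assumes "\<And>\<gamma>. q \<gamma> \<noteq> 0 \<Longrightarrow> \<gamma> \<in> Nmon n (2 * k)"
  shows "\<exists>E. (\<forall>\<alpha> \<beta>. E \<alpha> \<beta> = E \<beta> \<alpha>) \<and> gram_poly n k E = q"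
proof -
  let ?A = "Nmon n k"
  define pairs where "pairs \<gamma> = {p \<in> ?A \<times> ?A. fst p \<oplus> snd p = \<gamma>}" for \<gamma>
  define E where "E \<alpha> \<beta> = q (\<alpha> \<oplus> \<beta>) / real (card (pairs (\<alpha> \<oplus> \<beta>)))" for \<alpha> \<beta>
  have "gram_poly n k E \<gamma> = q \<gamma>" for \<gamma>
  proof -
    have "gram_poly n k E \<gamma> = (\<Sum>p\<in>pairs \<gamma>. q \<gamma> / real (card (pairs \<gamma>)))"
      unfolding gram_poly_def E_def pairs_def sum.cartesian_product
      by (simp add: sum.inter_filter[symmetric] finite_Nmon case_prod_beta cong: if_cong)
    also have "\<dots> = q \<gamma>"
    proof (cases "q \<gamma> = 0")
      case False
      then obtain \<alpha> \<beta> where "\<alpha> \<in> ?A" "\<beta> \<in> ?A" "\<gamma> = \<alpha> \<oplus> \<beta>"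
        using assms Nmon_split[of \<gamma> n k k] by (auto simp: mult_2)
      then have "(\<alpha>, \<beta>) \<in> pairs \<gamma>"
        by (simp add: pairs_def)
      moreover have "finite (pairs \<gamma>)"
        by (simp add: pairs_def finite_Nmon)
      ultimately have "card (pairs \<gamma>) \<noteq> 0"
        by auto
      then show ?thesis
        by simp
    qed simp
    finally show ?thesis .
  qed
  moreover have "E \<alpha> \<beta> = E \<beta> \<alpha>" for \<alpha> \<beta>
    by (simp add: E_def add.commute)
  ultimately show ?thesis
    by blast
qed

lemma abs_quadratic_form_le:
  fixes W :: "'a \<Rightarrow> 'a \<Rightarrow> real"
  assumes "finite A" and W: "\<forall>\<alpha>\<in>A. \<forall>\<beta>\<in>A. \<bar>W \<alpha> \<beta>\<bar> \<le> r"
  shows "\<bar>\<Sum>\<alpha>\<in>A. \<Sum>\<beta>\<in>A. u \<alpha> * W \<alpha> \<beta> * u \<beta>\<bar> \<le> r * real (card A) * (\<Sum>\<alpha>\<in>A. (u \<alpha>)\<^sup>2)"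
proof (cases "A = {}")
  case False
  then have "0 \<le> r"
    using W by (meson abs_ge_zero all_not_in_conv order_trans)
  have "\<bar>\<Sum>\<alpha>\<in>A. \<Sum>\<beta>\<in>A. u \<alpha> * W \<alpha> \<beta> * u \<beta>\<bar> \<le> (\<Sum>\<alpha>\<in>A. \<Sum>\<beta>\<in>A. r * (\<bar>u \<alpha>\<bar> * \<bar>u \<beta>\<bar>))"
  proof (rule order_trans[OF sum_abs sum_mono], rule order_trans[OF sum_abs sum_mono])
    fix \<alpha> \<beta> assume "\<alpha> \<in> A" "\<beta> \<in> A"
    then have "\<bar>W \<alpha> \<beta>\<bar> * (\<bar>u \<alpha>\<bar> * \<bar>u \<beta>\<bar>) \<le> r * (\<bar>u \<alpha>\<bar> * \<bar>u \<beta>\<bar>)"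
      using W by (intro mult_right_mono) auto
    then show "\<bar>u \<alpha> * W \<alpha> \<beta> * u \<beta>\<bar> \<le> r * (\<bar>u \<alpha>\<bar> * \<bar>u \<beta>\<bar>)"
      by (simp add: abs_mult mult_ac)
  qed
  also have "\<dots> = r * (\<Sum>\<alpha>\<in>A. \<bar>u \<alpha>\<bar>)\<^sup>2"
    by (simp add: power2_eq_square sum_distrib_left sum_distrib_right mult_ac)
  also have "\<dots> \<le> r * ((\<Sum>\<alpha>\<in>A. (u \<alpha>)\<^sup>2) * real (card A))"
    using sum_squared_le_sum_of_squares[of "\<lambda>\<alpha>. \<bar>u \<alpha>\<bar>" A] \<open>0 \<le> r\<close>
    by (intro mult_left_mono) auto
  finally show ?thesis
    by (simp add: mult_ac)
qed simp

lemma quadratic_form_pos_near_diagonal: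
  fixes G :: "'a \<Rightarrow> 'a \<Rightarrow> real"
  assumes fin: "finite A" and D: "\<forall>\<alpha>\<in>A. \<delta> \<le> D \<alpha>"
    and near: "\<forall>\<alpha>\<in>A. \<forall>\<beta>\<in>A. \<bar>G \<alpha> \<beta> - (if \<alpha> = \<beta> then D \<alpha> else 0)\<bar> \<le> r"
    and small: "r * real (card A) < \<delta>"
    and u: "\<exists>\<alpha>\<in>A. u \<alpha> \<noteq> 0"
  shows "0 < (\<Sum>\<alpha>\<in>A. \<Sum>\<beta>\<in>A. u \<alpha> * G \<alpha> \<beta> * u \<beta>)"
proof -
  define W where "W \<alpha> \<beta> = G \<alpha> \<beta> - (if \<alpha> = \<beta> then D \<alpha> else 0)" for \<alpha> \<beta>
  define S where "S = (\<Sum>\<alpha>\<in>A. (u \<alpha>)\<^sup>2)"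
  obtain \<alpha>0 where "\<alpha>0 \<in> A" "u \<alpha>0 \<noteq> 0"
    using u by blast
  then have "0 < S"
    unfolding S_def using fin by (intro sum_pos2[of A \<alpha>0]) auto
  have "(\<Sum>\<alpha>\<in>A. \<Sum>\<beta>\<in>A. u \<alpha> * G \<alpha> \<beta> * u \<beta>) =
      (\<Sum>\<alpha>\<in>A. \<Sum>\<beta>\<in>A. (if \<alpha> = \<beta> then D \<alpha> * (u \<alpha>)\<^sup>2 else 0) + u \<alpha> * W \<alpha> \<beta> * u \<beta>)"
    by (intro sum.cong refl) (simp add: W_def power2_eq_square algebra_simps)
  also have "\<dots> = (\<Sum>\<alpha>\<in>A. D \<alpha> * (u \<alpha>)\<^sup>2) + (\<Sum>\<alpha>\<in>A. \<Sum>\<beta>\<in>A. u \<alpha> * W \<alpha> \<beta> * u \<beta>)"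
    using fin by (simp add: sum.distrib)
  finally have split: "(\<Sum>\<alpha>\<in>A. \<Sum>\<beta>\<in>A. u \<alpha> * G \<alpha> \<beta> * u \<beta>) =
      (\<Sum>\<alpha>\<in>A. D \<alpha> * (u \<alpha>)\<^sup>2) + (\<Sum>\<alpha>\<in>A. \<Sum>\<beta>\<in>A. u \<alpha> * W \<alpha> \<beta> * u \<beta>)" .
  have "\<delta> * S \<le> (\<Sum>\<alpha>\<in>A. D \<alpha> * (u \<alpha>)\<^sup>2)"
    unfolding S_def sum_distrib_left using D by (intro sum_mono mult_right_mono) auto
  moreover have "\<bar>\<Sum>\<alpha>\<in>A. \<Sum>\<beta>\<in>A. u \<alpha> * W \<alpha> \<beta> * u \<beta>\<bar> \<le> r * real (card A) * S"
    unfolding S_def using fin near by (intro abs_quadratic_form_le) (auto simp: W_def)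
  moreover have "r * real (card A) * S < \<delta> * S"
    using small \<open>0 < S\<close> by simp
  ultimately show ?thesis
    unfolding split by linarith
qed

lemma pos_def_near_diagonal:
  assumes "\<forall>\<alpha>\<in>Nmon n d. \<forall>\<beta>\<in>Nmon n d. G \<alpha> \<beta> = G \<beta> \<alpha>"
    and "\<forall>\<alpha>\<in>Nmon n d. \<delta> \<le> D \<alpha>"
    and "\<forall>\<alpha>\<in>Nmon n d. \<forall>\<beta>\<in>Nmon n d. \<bar>G \<alpha> \<beta> - (if \<alpha> = \<beta> then D \<alpha> else 0)\<bar> \<le> r"
    and "r * real (card (Nmon n d)) < \<delta>"
  shows "pos_def n d G"
  unfolding pos_def_def using assms quadratic_form_pos_near_diagonal[OF finite_Nmon] by blast

lemma finite_pos_lower_bound: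
  fixes f :: "'a \<Rightarrow> real"
  assumes "finite A" and "\<forall>x\<in>A. 0 < f x"
  obtains \<delta> where "0 < \<delta>" and "\<forall>x\<in>A. \<delta> \<le> f x"
proof (cases "A = {}")
  case False
  then have "Min (f ` A) \<in> f ` A"
    using assms(1) by (intro Min_in) auto
  then show thesis
    using that[of "Min (f ` A)"] assms by auto
qed (use that[of 1] in auto)

lemma pos_def_diagm:
  assumes "\<forall>\<alpha>\<in>Nmon n d. 0 < f \<alpha>"
  shows "pos_def n d (diagm f)"
proof -
  obtain \<delta> where "0 < \<delta>" and "\<forall>\<alpha>\<in>Nmon n d. \<delta> \<le> f \<alpha>"
    using finite_pos_lower_bound[OF finite_Nmon assms] .
  then show ?thesis
    by (intro pos_def_near_diagonal[where D = f and r = 0]) (auto simp: diagm_def)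
qed

definition mat_sq :: "nat \<Rightarrow> nat \<Rightarrow> (mono \<Rightarrow> mono \<Rightarrow> real) \<Rightarrow> mono \<Rightarrow> mono \<Rightarrow> real" where
  "mat_sq n d X = (\<lambda>\<alpha> \<beta>. \<Sum>\<gamma>\<in>Nmon n d. X \<alpha> \<gamma> * X \<gamma> \<beta>)"

lemma pos_def_mat_sq:
  assumes X: "pos_def n d X"
  shows "pos_def n d (mat_sq n d X)"
  unfolding pos_def_def
proof (intro conjI allI impI ballI)
  let ?A = "Nmon n d"
  have sym: "X \<alpha> \<beta> = X \<beta> \<alpha>" if "\<alpha> \<in> ?A" "\<beta> \<in> ?A" for \<alpha> \<beta>
    using X that by (simp add: pos_def_def)
  show "mat_sq n d X \<alpha> \<beta> = mat_sq n d X \<beta> \<alpha>" if "\<alpha> \<in> ?A" "\<beta> \<in> ?A" for \<alpha> \<beta>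
    unfolding mat_sq_def using that by (intro sum.cong refl) (simp add: sym mult.commute)
  fix u :: "mono \<Rightarrow> real"
  assume u: "\<exists>\<alpha>\<in>?A. u \<alpha> \<noteq> 0"
  define v where "v \<gamma> = (\<Sum>\<alpha>\<in>?A. u \<alpha> * X \<alpha> \<gamma>)" for \<gamma>
  have "(\<Sum>\<alpha>\<in>?A. \<Sum>\<beta>\<in>?A. u \<alpha> * mat_sq n d X \<alpha> \<beta> * u \<beta>) =
      (\<Sum>\<gamma>\<in>?A. (\<Sum>\<alpha>\<in>?A. u \<alpha> * X \<alpha> \<gamma>) * (\<Sum>\<beta>\<in>?A. X \<gamma> \<beta> * u \<beta>))"
    unfolding mat_sq_def sum_distrib_left sum_distrib_right
    by (subst sum.swap, subst (2) sum.swap, subst sum.swap) (simp add: mult_ac)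
  also have "\<dots> = (\<Sum>\<gamma>\<in>?A. (v \<gamma>)\<^sup>2)"
  proof (intro sum.cong refl)
    fix \<gamma> assume "\<gamma> \<in> ?A"
    then have "(\<Sum>\<beta>\<in>?A. X \<gamma> \<beta> * u \<beta>) = v \<gamma>"
      unfolding v_def by (intro sum.cong refl) (simp add: sym mult.commute)
    then show "(\<Sum>\<alpha>\<in>?A. u \<alpha> * X \<alpha> \<gamma>) * (\<Sum>\<beta>\<in>?A. X \<gamma> \<beta> * u \<beta>) = (v \<gamma>)\<^sup>2"
      by (simp add: v_def power2_eq_square)
  qed
  also have "\<dots> > 0"
  proof (rule ccontr)
    assume "\<not> (\<Sum>\<gamma>\<in>?A. (v \<gamma>)\<^sup>2) > 0"
    moreover have "0 \<le> (\<Sum>\<gamma>\<in>?A. (v \<gamma>)\<^sup>2)"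
      by (simp add: sum_nonneg)
    ultimately have "\<forall>\<gamma>\<in>?A. v \<gamma> = 0"
      by (simp add: sum_nonneg_eq_0_iff finite_Nmon)
    then have "(\<Sum>\<gamma>\<in>?A. v \<gamma> * u \<gamma>) = 0"
      by simp
    moreover have "(\<Sum>\<gamma>\<in>?A. v \<gamma> * u \<gamma>) > 0"
      using X u unfolding pos_def_def v_def sum_distrib_right by (subst sum.swap) blast
    ultimately show False
      by simp
  qed
  finally show "0 < (\<Sum>\<alpha>\<in>?A. \<Sum>\<beta>\<in>?A. u \<alpha> * mat_sq n d X \<alpha> \<beta> * u \<beta>)" .
qed

lemma mat_sq_diag_plus:
  assumes "\<alpha> \<in> Nmon n d" and "\<beta> \<in> Nmon n d"
  shows "mat_sq n d (\<lambda>\<alpha> \<beta>. diagm D \<alpha> \<beta> + Z \<alpha> \<beta>) \<alpha> \<beta> =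
    diagm (\<lambda>\<gamma>. D \<gamma> * D \<gamma>) \<alpha> \<beta> + (D \<alpha> + D \<beta>) * Z \<alpha> \<beta> + mat_sq n d Z \<alpha> \<beta>"
proof -
  have "mat_sq n d (\<lambda>\<alpha> \<beta>. diagm D \<alpha> \<beta> + Z \<alpha> \<beta>) \<alpha> \<beta> =
     (\<Sum>\<gamma>\<in>Nmon n d. (if \<gamma> = \<alpha> then D \<alpha> * (diagm D \<alpha> \<beta> + Z \<alpha> \<beta>) else 0) +
        (if \<gamma> = \<beta> then Z \<alpha> \<beta> * D \<beta> else 0) + Z \<alpha> \<gamma> * Z \<gamma> \<beta>)"
    unfolding mat_sq_def diagm_def by (intro sum.cong refl) (auto simp: algebra_simps)
  also have "\<dots> = diagm (\<lambda>\<gamma>. D \<gamma> * D \<gamma>) \<alpha> \<beta> + (D \<alpha> + D \<beta>) * Z \<alpha> \<beta> + mat_sq n d Z \<alpha> \<beta>"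
    using assms by (simp add: sum.distrib finite_Nmon mat_sq_def diagm_def algebra_simps)
  finally show ?thesis .
qed

lemma mat_sq_diagm:
  "\<alpha> \<in> Nmon n d \<Longrightarrow> \<beta> \<in> Nmon n d \<Longrightarrow> mat_sq n d (diagm D) \<alpha> \<beta> = diagm (\<lambda>\<gamma>. D \<gamma> * D \<gamma>) \<alpha> \<beta>"
  using mat_sq_diag_plus[of \<alpha> n d \<beta> D "\<lambda>_ _. 0"] by (simp add: mat_sq_def)

lemma convergent_if_geometric_steps:
  fixes x :: "nat \<Rightarrow> real"
  assumes "\<And>j. \<bar>x (Suc j) - x j\<bar> \<le> C * q ^ j" and "0 \<le> q" and "q < 1"
  shows "convergent x"
proof -
  have "summable (\<lambda>j. x (Suc j) - x j)"
    using assms by (intro summable_comparison_test[OF _ summable_mult[OF summable_geometric]]) auto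
  then have "convergent (\<lambda>n. x 0 + (\<Sum>j<n. x (Suc j) - x j))"
    by (intro convergent_add convergent_const) (simp add: summable_iff_convergent)
  then show ?thesis
    by (simp add: sum_lessThan_telescope)
qed

lemma sum_prod_diff_bound:
  fixes Z Z' :: "'a \<Rightarrow> 'a \<Rightarrow> real"
  assumes "\<alpha> \<in> A" and "\<beta> \<in> A"
    and Z: "\<forall>\<alpha>\<in>A. \<forall>\<beta>\<in>A. \<bar>Z \<alpha> \<beta>\<bar> \<le> r" and Z': "\<forall>\<alpha>\<in>A. \<forall>\<beta>\<in>A. \<bar>Z' \<alpha> \<beta>\<bar> \<le> r"
    and diff: "\<forall>\<alpha>\<in>A. \<forall>\<beta>\<in>A. \<bar>Z \<alpha> \<beta> - Z' \<alpha> \<beta>\<bar> \<le> t"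
  shows "\<bar>\<Sum>\<gamma>\<in>A. Z \<alpha> \<gamma> * Z \<gamma> \<beta> - Z' \<alpha> \<gamma> * Z' \<gamma> \<beta>\<bar> \<le> real (card A) * (2 * r * t)"
proof -
  have "0 \<le> r"
    using Z assms(1) by (meson abs_ge_zero order_trans)
  have "\<bar>Z \<alpha> \<gamma> * Z \<gamma> \<beta> - Z' \<alpha> \<gamma> * Z' \<gamma> \<beta>\<bar> \<le> 2 * r * t" if "\<gamma> \<in> A" for \<gamma>
  proof -
    have "\<bar>Z \<alpha> \<gamma>\<bar> \<le> r" "\<bar>Z' \<gamma> \<beta>\<bar> \<le> r" "\<bar>Z \<gamma> \<beta> - Z' \<gamma> \<beta>\<bar> \<le> t" "\<bar>Z \<alpha> \<gamma> - Z' \<alpha> \<gamma>\<bar> \<le> t"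
      using assms that by auto
    then have "\<bar>Z \<alpha> \<gamma> * (Z \<gamma> \<beta> - Z' \<gamma> \<beta>)\<bar> \<le> r * t" "\<bar>(Z \<alpha> \<gamma> - Z' \<alpha> \<gamma>) * Z' \<gamma> \<beta>\<bar> \<le> t * r"
      unfolding abs_mult using \<open>0 \<le> r\<close> by (intro mult_mono; simp)+
    moreover have "Z \<alpha> \<gamma> * Z \<gamma> \<beta> - Z' \<alpha> \<gamma> * Z' \<gamma> \<beta> =
        Z \<alpha> \<gamma> * (Z \<gamma> \<beta> - Z' \<gamma> \<beta>) + (Z \<alpha> \<gamma> - Z' \<alpha> \<gamma>) * Z' \<gamma> \<beta>"
      by (simp add: algebra_simps)
    ultimately show ?thesis
      using abs_triangle_ineq[of "Z \<alpha> \<gamma> * (Z \<gamma> \<beta> - Z' \<gamma> \<beta>)" "(Z \<alpha> \<gamma> - Z' \<alpha> \<gamma>) * Z' \<gamma> \<beta>"]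
      by (simp add: mult.commute[of t r])
  qed
  then have "\<bar>\<Sum>\<gamma>\<in>A. Z \<alpha> \<gamma> * Z \<gamma> \<beta> - Z' \<alpha> \<gamma> * Z' \<gamma> \<beta>\<bar> \<le> (\<Sum>\<gamma>\<in>A. 2 * r * t)"
    by (intro order_trans[OF sum_abs sum_mono])
  then show ?thesis
    by simp
qed

text \<open>Fixed points Z of this map are exactly the symmetric solutions of
  (diag D + Z) (diag D + Z) = diag (D * D) + E.\<close>
definition sqrt_step ::
    "'a set \<Rightarrow> ('a \<Rightarrow> real) \<Rightarrow> ('a \<Rightarrow> 'a \<Rightarrow> real) \<Rightarrow> ('a \<Rightarrow> 'a \<Rightarrow> real) \<Rightarrow> 'a \<Rightarrow> 'a \<Rightarrow> real" where
  "sqrt_step A D E Z \<alpha> \<beta> = (E \<alpha> \<beta> - (\<Sum>\<gamma>\<in>A. Z \<alpha> \<gamma> * Z \<gamma> \<beta>)) / (D \<alpha> + D \<beta>)"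

definition sqrt_iter ::
    "'a set \<Rightarrow> ('a \<Rightarrow> real) \<Rightarrow> ('a \<Rightarrow> 'a \<Rightarrow> real) \<Rightarrow> nat \<Rightarrow> 'a \<Rightarrow> 'a \<Rightarrow> real" where
  "sqrt_iter A D E j = (sqrt_step A D E ^^ j) (\<lambda>_ _. 0)"

lemma sqrt_iter_Suc: "sqrt_iter A D E (Suc j) = sqrt_step A D E (sqrt_iter A D E j)"
  by (simp add: sqrt_iter_def)

context
  fixes A :: "'a set" and D :: "'a \<Rightarrow> real" and E :: "'a \<Rightarrow> 'a \<Rightarrow> real" and \<delta> r :: real
  assumes fin: "finite A" and nonempty: "A \<noteq> {}" and \<delta>: "0 < \<delta>" and D: "\<forall>\<alpha>\<in>A. \<delta> \<le> D \<alpha>"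
    and r_def: "r = \<delta> / (4 * real (card A))"
    and E: "\<forall>\<alpha>\<in>A. \<forall>\<beta>\<in>A. \<bar>E \<alpha> \<beta>\<bar> \<le> \<delta> * r"
begin

private lemma card_r: "real (card A) * r = \<delta> / 4"
  using fin nonempty by (simp add: r_def card_gt_0_iff)

private lemma D_sum:
  assumes "\<alpha> \<in> A" and "\<beta> \<in> A"
  shows "2 * \<delta> \<le> D \<alpha> + D \<beta>"
proof -
  have "\<delta> \<le> D \<alpha>" "\<delta> \<le> D \<beta>"
    using D assms by auto
  then show ?thesis
    by linarith
qed

private lemma r_nonneg: "0 \<le> r"
  using \<delta> by (simp add: r_def)

lemma sqrt_step_bounded:
  assumes Z: "\<forall>\<alpha>\<in>A. \<forall>\<beta>\<in>A. \<bar>Z \<alpha> \<beta>\<bar> \<le> r" and \<alpha>: "\<alpha> \<in> A" and \<beta>: "\<beta> \<in> A"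
  shows "\<bar>sqrt_step A D E Z \<alpha> \<beta>\<bar> \<le> r"
proof -
  have "\<bar>\<Sum>\<gamma>\<in>A. Z \<alpha> \<gamma> * Z \<gamma> \<beta> - 0 * 0\<bar> \<le> real (card A) * (2 * r * r)"
    using sum_prod_diff_bound[of \<alpha> A \<beta> Z r "\<lambda>_ _. 0" r] Z \<alpha> \<beta> r_nonneg by simp
  also have "\<dots> = 2 * r * (real (card A) * r)"
    by (simp only: mult_ac)
  finally have "\<bar>\<Sum>\<gamma>\<in>A. Z \<alpha> \<gamma> * Z \<gamma> \<beta>\<bar> \<le> \<delta> * r / 2"
    by (simp add: card_r)
  moreover have "\<bar>E \<alpha> \<beta>\<bar> \<le> \<delta> * r"
    using E \<alpha> \<beta> by blast
  ultimately have "\<bar>E \<alpha> \<beta> - (\<Sum>\<gamma>\<in>A. Z \<alpha> \<gamma> * Z \<gamma> \<beta>)\<bar> \<le> 2 * \<delta> * r"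
    using abs_triangle_ineq4[of "E \<alpha> \<beta>" "\<Sum>\<gamma>\<in>A. Z \<alpha> \<gamma> * Z \<gamma> \<beta>"]
      mult_nonneg_nonneg[OF less_imp_le[OF \<delta>] r_nonneg]
    by linarith
  also have "\<dots> \<le> (D \<alpha> + D \<beta>) * r"
    using D_sum[OF \<alpha> \<beta>] r_nonneg by (intro mult_right_mono) auto
  finally show ?thesis
    using D_sum[OF \<alpha> \<beta>] \<delta>
    by (simp add: sqrt_step_def abs_divide divide_le_eq mult.commute)
qed

lemma sqrt_step_contraction:
  assumes "\<forall>\<alpha>\<in>A. \<forall>\<beta>\<in>A. \<bar>Z \<alpha> \<beta>\<bar> \<le> r" and "\<forall>\<alpha>\<in>A. \<forall>\<beta>\<in>A. \<bar>Z' \<alpha> \<beta>\<bar> \<le> r"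
    and diff: "\<forall>\<alpha>\<in>A. \<forall>\<beta>\<in>A. \<bar>Z \<alpha> \<beta> - Z' \<alpha> \<beta>\<bar> \<le> t" and "\<alpha> \<in> A" and "\<beta> \<in> A"
  shows "\<bar>sqrt_step A D E Z \<alpha> \<beta> - sqrt_step A D E Z' \<alpha> \<beta>\<bar> \<le> t / 4"
proof -
  have "0 \<le> t"
    using diff assms(4,5) by (meson abs_ge_zero order_trans)
  have "sqrt_step A D E Z \<alpha> \<beta> - sqrt_step A D E Z' \<alpha> \<beta> =
      - (\<Sum>\<gamma>\<in>A. Z \<alpha> \<gamma> * Z \<gamma> \<beta> - Z' \<alpha> \<gamma> * Z' \<gamma> \<beta>) / (D \<alpha> + D \<beta>)"
    unfolding sqrt_step_def by (simp add: diff_divide_distrib[symmetric] sum_subtractf)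
  moreover have "\<bar>\<Sum>\<gamma>\<in>A. Z \<alpha> \<gamma> * Z \<gamma> \<beta> - Z' \<alpha> \<gamma> * Z' \<gamma> \<beta>\<bar> \<le> 2 * \<delta> * (t / 4)"
  proof -
    have "\<bar>\<Sum>\<gamma>\<in>A. Z \<alpha> \<gamma> * Z \<gamma> \<beta> - Z' \<alpha> \<gamma> * Z' \<gamma> \<beta>\<bar> \<le> real (card A) * (2 * r * t)"
      by (rule sum_prod_diff_bound[OF assms(4,5,1,2) diff])
    also have "\<dots> = 2 * t * (real (card A) * r)"
      by (simp only: mult_ac)
    finally show ?thesis
      by (simp add: card_r)
  qed
  moreover have "2 * \<delta> * (t / 4) \<le> (D \<alpha> + D \<beta>) * (t / 4)"
    using D_sum[OF assms(4,5)] \<open>0 \<le> t\<close> by (intro mult_right_mono) auto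
  ultimately show ?thesis
    using D_sum[OF assms(4,5)] \<delta> by (simp add: abs_divide divide_le_eq mult.commute)
qed

lemma sqrt_step_symmetric:
  assumes "\<forall>\<alpha>\<in>A. \<forall>\<beta>\<in>A. Z \<alpha> \<beta> = Z \<beta> \<alpha>" and "\<forall>\<alpha>\<in>A. \<forall>\<beta>\<in>A. E \<alpha> \<beta> = E \<beta> \<alpha>"
    and "\<alpha> \<in> A" and "\<beta> \<in> A"
  shows "sqrt_step A D E Z \<alpha> \<beta> = sqrt_step A D E Z \<beta> \<alpha>"
proof -
  have "(\<Sum>\<gamma>\<in>A. Z \<alpha> \<gamma> * Z \<gamma> \<beta>) = (\<Sum>\<gamma>\<in>A. Z \<beta> \<gamma> * Z \<gamma> \<alpha>)"
    using assms by (intro sum.cong refl) (simp add: mult.commute)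
  then show ?thesis
    using assms by (simp add: sqrt_step_def add.commute)
qed

lemma sqrt_iter_bounded_symmetric:
  assumes E_sym: "\<forall>\<alpha>\<in>A. \<forall>\<beta>\<in>A. E \<alpha> \<beta> = E \<beta> \<alpha>"
  shows "\<forall>\<alpha>\<in>A. \<forall>\<beta>\<in>A. \<bar>sqrt_iter A D E j \<alpha> \<beta>\<bar> \<le> r \<and> sqrt_iter A D E j \<alpha> \<beta> = sqrt_iter A D E j \<beta> \<alpha>"
proof (induction j)
  case 0
  then show ?case
    using r_nonneg by (simp add: sqrt_iter_def)
next
  case (Suc j)
  then show ?case
    unfolding sqrt_iter_Suc using sqrt_step_bounded sqrt_step_symmetric[OF _ E_sym] by blast
qed

lemma sqrt_iter_steps:
  assumes E_sym: "\<forall>\<alpha>\<in>A. \<forall>\<beta>\<in>A. E \<alpha> \<beta> = E \<beta> \<alpha>"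
  shows "\<forall>\<alpha>\<in>A. \<forall>\<beta>\<in>A. \<bar>sqrt_iter A D E (Suc j) \<alpha> \<beta> - sqrt_iter A D E j \<alpha> \<beta>\<bar> \<le> r * (1 / 4) ^ j"
proof (induction j)
  case 0
  then show ?case
    using sqrt_iter_bounded_symmetric[OF E_sym, of 1] by (simp add: sqrt_iter_def)
next
  case (Suc j)
  show ?case
  proof (intro ballI)
    fix \<alpha> \<beta> assume "\<alpha> \<in> A" "\<beta> \<in> A"
    then have "\<bar>sqrt_step A D E (sqrt_iter A D E (Suc j)) \<alpha> \<beta> - sqrt_step A D E (sqrt_iter A D E j) \<alpha> \<beta>\<bar>
        \<le> r * (1 / 4) ^ j / 4"
      using sqrt_step_contraction[OF _ _ Suc.IH] sqrt_iter_bounded_symmetric[OF E_sym] by blast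
    then show "\<bar>sqrt_iter A D E (Suc (Suc j)) \<alpha> \<beta> - sqrt_iter A D E (Suc j) \<alpha> \<beta>\<bar> \<le> r * (1 / 4) ^ Suc j"
      unfolding sqrt_iter_Suc[of _ _ _ "Suc j"] sqrt_iter_Suc[of _ _ _ j] by simp
  qed
qed

text \<open>The iterates move by at most r / 4^j in step j, so they converge; the limit is a fixed
  point of \<^const>\<open>sqrt_step\<close>.\<close>
lemma sqrt_near_diagonal:
  assumes E_sym: "\<forall>\<alpha>\<in>A. \<forall>\<beta>\<in>A. E \<alpha> \<beta> = E \<beta> \<alpha>"
  shows "\<exists>Z. \<forall>\<alpha>\<in>A. \<forall>\<beta>\<in>A. Z \<alpha> \<beta> = Z \<beta> \<alpha> \<and> \<bar>Z \<alpha> \<beta>\<bar> \<le> r \<and>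
           (D \<alpha> + D \<beta>) * Z \<alpha> \<beta> + (\<Sum>\<gamma>\<in>A. Z \<alpha> \<gamma> * Z \<gamma> \<beta>) = E \<alpha> \<beta>"
proof -
  let ?Z = "sqrt_iter A D E"
  note inv = sqrt_iter_bounded_symmetric[OF E_sym]
  define Z where "Z \<alpha> \<beta> = lim (\<lambda>j. ?Z j \<alpha> \<beta>)" for \<alpha> \<beta>
  have lim: "(\<lambda>j. ?Z j \<alpha> \<beta>) \<longlonglongrightarrow> Z \<alpha> \<beta>" if "\<alpha> \<in> A" "\<beta> \<in> A" for \<alpha> \<beta>
    unfolding Z_def convergent_LIMSEQ_iff[symmetric]
    by (rule convergent_if_geometric_steps[of _ r "1 / 4"]) (use sqrt_iter_steps[OF E_sym] that in auto)
  show ?thesis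
  proof (intro exI ballI conjI)
    fix \<alpha> \<beta> assume \<alpha>: "\<alpha> \<in> A" and \<beta>: "\<beta> \<in> A"
    show "Z \<alpha> \<beta> = Z \<beta> \<alpha>"
      using inv \<alpha> \<beta> by (simp add: Z_def)
    show "\<bar>Z \<alpha> \<beta>\<bar> \<le> r"
      using inv \<alpha> \<beta> by (intro LIMSEQ_le_const2[OF tendsto_rabs[OF lim]]) auto
    have "0 < D \<alpha> + D \<beta>"
      using D_sum[OF \<alpha> \<beta>] \<delta> by linarith
    then have "(\<lambda>j. sqrt_step A D E (?Z j) \<alpha> \<beta>) \<longlonglongrightarrow> sqrt_step A D E Z \<alpha> \<beta>"
      unfolding sqrt_step_def using lim \<alpha> \<beta> by (intro tendsto_intros) auto
    moreover have "(\<lambda>j. sqrt_step A D E (?Z j) \<alpha> \<beta>) \<longlonglongrightarrow> Z \<alpha> \<beta>"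
      unfolding sqrt_iter_Suc[symmetric] by (rule LIMSEQ_Suc[OF lim[OF \<alpha> \<beta>]])
    ultimately have "sqrt_step A D E Z \<alpha> \<beta> = Z \<alpha> \<beta>"
      by (rule LIMSEQ_unique)
    then show "(D \<alpha> + D \<beta>) * Z \<alpha> \<beta> + (\<Sum>\<gamma>\<in>A. Z \<alpha> \<gamma> * Z \<gamma> \<beta>) = E \<alpha> \<beta>"
      using \<open>0 < D \<alpha> + D \<beta>\<close> by (simp add: sqrt_step_def field_simps)
  qed
qed

end

lemma hdeg_ball_poly: "hdeg n (ball_poly n R) = (if n = 0 then 0 else 1)"
proof (cases "n = 0")
  case True
  then show ?thesis
    by (simp add: hdeg_def pdeg_def mdeg_def image_constant_conv)
next
  case False
  let ?S = "{\<alpha>. ball_poly n R \<alpha> \<noteq> 0}"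
  have supp: "?S \<subseteq> insert zero_mono ((\<lambda>j. mono_single j 2) ` {..<n})"
    by (auto simp: ball_poly_def mono_single_def)
  have "mono_single 0 2 \<in> ?S"
    using False by (auto simp: ball_poly_def mono_single_def zero_mono_def fun_eq_iff)
  then have "2 \<in> mdeg n ` ?S"
    using False by (metis image_eqI mdeg_mono_single neq0_conv)
  moreover have "mdeg n \<alpha> \<le> 2" if "\<alpha> \<in> ?S" for \<alpha>
  proof -
    have "\<alpha> = zero_mono \<or> (\<exists>j<n. \<alpha> = mono_single j 2)"
      using supp that by auto
    then show ?thesis
      by (auto simp: mdeg_mono_single)
  qed
  then have "\<forall>x\<in>mdeg n ` ?S. x \<le> 2"
    by blast
  moreover have "finite ?S"
    using supp by (rule finite_subset) simp
  ultimately have "pdeg n (ball_poly n R) = 2"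
    unfolding pdeg_def by (auto intro: Max_eqI)
  then show ?thesis
    using False by (simp add: hdeg_def)
qed

lemma pmul_ball_poly:
  assumes "finite_supp \<gamma>"
  shows "pmul (ball_poly n R) Q \<gamma> =
    R * Q \<gamma> - (\<Sum>j<n. if 2 \<le> \<gamma> j then Q (\<lambda>i. \<gamma> i - mono_single j 2 i) else 0)"
proof -
  let ?u = "\<lambda>j. mono_single j 2"
  have inj: "inj_on ?u {..<n}"
    by (rule inj_onI) (metis mono_single_def zero_neq_numeral)
  have zero_notin: "zero_mono \<notin> ?u ` {..<n}"
    by (auto simp: mono_single_def zero_mono_def fun_eq_iff) (metis zero_neq_numeral)
  have ball_single: "ball_poly n R (?u j) = -1" if "j < n" for j
  proof -
    have "?u j \<noteq> zero_mono"
      using that zero_notin by (metis image_eqI lessThan_iff)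
    then show ?thesis
      using that by (auto simp: ball_poly_def mono_single_def)
  qed
  have le_single: "(\<forall>i. ?u j i \<le> \<gamma> i) \<longleftrightarrow> 2 \<le> \<gamma> j" for j
    by (auto simp: mono_single_def)
  have "pmul (ball_poly n R) Q \<gamma> = (\<Sum>\<alpha>\<in>insert zero_mono (?u ` {..<n}).
      if \<forall>i. \<alpha> i \<le> \<gamma> i then ball_poly n R \<alpha> * Q (\<lambda>i. \<gamma> i - \<alpha> i) else 0)"
    by (rule pmul_eq_sum_supp[OF assms]) (auto simp: ball_poly_def mono_single_def image_iff split: if_splits)
  also have "\<dots> = R * Q \<gamma> +
      (\<Sum>j<n. if 2 \<le> \<gamma> j then ball_poly n R (?u j) * Q (\<lambda>i. \<gamma> i - ?u j i) else 0)"
    using zero_notin by (simp add: sum.reindex[OF inj] le_single) (simp add: ball_poly_def zero_mono_def)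
  also have "\<dots> = R * Q \<gamma> + (\<Sum>j<n. - (if 2 \<le> \<gamma> j then Q (\<lambda>i. \<gamma> i - ?u j i) else 0))"
    by (intro arg_cong2[where f = plus] refl sum.cong) (simp_all add: ball_single)
  finally show ?thesis
    by (simp add: sum_negf)
qed

lemma gram_poly_diagm_vanishing:
  assumes "\<forall>\<beta>. \<beta> \<notin> Nmon n d \<longrightarrow> e \<beta> = 0"
  shows "gram_poly n d (diagm e) \<gamma> = (if \<forall>i. even (\<gamma> i) then e (\<lambda>i. \<gamma> i div 2) else 0)"
  using assms by (simp add: gram_poly_diagm)

lemma minus_double_single:
  assumes "2 \<le> \<gamma> j"
  shows "(\<forall>i. even (\<gamma> i - mono_single j 2 i)) \<longleftrightarrow> (\<forall>i. even (\<gamma> i))"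
    and "(\<lambda>i. (\<gamma> i - mono_single j 2 i) div 2) = (\<lambda>i. \<gamma> i div 2 - mono_single j 1 i)"
  using assms by (auto simp: mono_single_def fun_eq_iff)

lemma pmul_ball_poly_gram_diagm:
  fixes \<gamma> :: mono
  assumes e: "\<forall>\<beta>. \<beta> \<notin> Nmon n d \<longrightarrow> e \<beta> = 0"
  defines "\<beta> \<equiv> \<lambda>i. \<gamma> i div 2"
  shows "pmul (ball_poly n R) (gram_poly n d (diagm e)) \<gamma> =
    (if finite_supp \<gamma> \<and> (\<forall>i. even (\<gamma> i))
     then R * e \<beta> - (\<Sum>j<n. if 1 \<le> \<beta> j then e (\<lambda>i. \<beta> i - mono_single j 1 i) else 0)
     else 0)"
proof -
  note Q = gram_poly_diagm_vanishing[OF e]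
  have shift: "(if 2 \<le> \<gamma> j then gram_poly n d (diagm e) (\<lambda>i. \<gamma> i - mono_single j 2 i) else 0) =
      (if \<forall>i. even (\<gamma> i) then (if 1 \<le> \<beta> j then e (\<lambda>i. \<beta> i - mono_single j 1 i) else 0) else 0)" for j
  proof (cases "2 \<le> \<gamma> j")
    case True
    moreover have "1 \<le> \<beta> j"
      using True by (simp add: \<beta>_def Suc_le_eq div_greater_zero_iff)
    ultimately show ?thesis
      using minus_double_single[of \<gamma> j] Q by (simp add: \<beta>_def)
  qed (simp add: \<beta>_def)
  consider (infinite) "\<not> finite_supp \<gamma>" | (even) "finite_supp \<gamma>" "\<forall>i. even (\<gamma> i)"
    | (odd) "finite_supp \<gamma>" "\<not> (\<forall>i. even (\<gamma> i))"
    by blast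
  then show ?thesis
  proof cases
    case infinite
    then show ?thesis
      by (simp add: pmul_not_finite_supp)
  next
    case even
    then show ?thesis
      by (simp add: pmul_ball_poly shift Q \<beta>_def)
  next
    case odd
    then show ?thesis
      unfolding pmul_ball_poly[OF odd(1)] shift Q[of \<gamma>]
      by (simp only: if_not_P[OF odd(2)] sum.neutral_const) simp
  qed
qed

text \<open>Comparing the coefficients of x^(2 \<beta>) in
  c = (sum over \<beta> of a \<beta> x^(2 \<beta>)) + (R - |x|^2) (sum over \<beta> of e \<beta> x^(2 \<beta>))
  forces a = ball_sos_coeff n R c e.\<close>
definition ball_sos_coeff :: "nat \<Rightarrow> real \<Rightarrow> real \<Rightarrow> (mono \<Rightarrow> real) \<Rightarrow> mono \<Rightarrow> real" where
  "ball_sos_coeff n R c e \<beta> = c * (if \<beta> = zero_mono then 1 else 0) - R * e \<beta> +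
     (\<Sum>j<n. if 1 \<le> \<beta> j then e (\<lambda>i. \<beta> i - mono_single j 1 i) else 0)"

lemma vanishing_minus_single:
  assumes e: "\<forall>\<beta>. \<beta> \<notin> Nmon n d \<longrightarrow> e \<beta> = 0"
    and "d < k" and "\<beta> \<notin> Nmon n k" and "j < n"
  shows "e (\<lambda>i. \<beta> i - mono_single j 1 i) = 0"
proof (rule e[rule_format], rule notI)
  assume in_d: "(\<lambda>i. \<beta> i - mono_single j 1 i) \<in> Nmon n d"
  show False
  proof (cases "0 < \<beta> j")
    case True
    have "(\<lambda>i. \<beta> i - mono_single j 1 i) \<oplus> mono_single j 1 \<in> Nmon n (d + 1)"
      using Nmon_add[OF in_d mono_single_in_Nmon[OF \<open>j < n\<close>]] .
    then have "\<beta> \<in> Nmon n (d + 1)"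
      using mono_single_split[of \<beta> j] True by simp
    then show False
      using assms(2,3) Nmon_mono[of "d + 1" k n] by auto
  next
    case False
    then have "(\<lambda>i. \<beta> i - mono_single j 1 i) = \<beta>"
      by (auto simp: mono_single_def)
    then show False
      using in_d assms(2,3) Nmon_mono[of d k n] by auto
  qed
qed

lemma ball_identity:
  assumes e: "\<forall>\<beta>. \<beta> \<notin> Nmon n d \<longrightarrow> e \<beta> = 0" and "d \<le> k" and "0 < n \<Longrightarrow> d < k"
  shows "gram_poly n k (diagm (ball_sos_coeff n R c e)) \<gamma> +
      pmul (ball_poly n R) (gram_poly n d (diagm e)) \<gamma> = pconst c \<gamma>"
proof (cases "finite_supp \<gamma> \<and> (\<forall>i. even (\<gamma> i))")
  case False
  have "gram_poly n k (diagm (ball_sos_coeff n R c e)) \<gamma> = 0"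
    using False Nmon_finite_supp[OF gram_poly_supp] by (metis gram_poly_diagm)
  moreover have "pmul (ball_poly n R) (gram_poly n d (diagm e)) \<gamma> = 0"
    by (subst pmul_ball_poly_gram_diagm[OF e]) (rule if_not_P[OF False])
  moreover have "pconst c \<gamma> = 0"
    using False Nmon_finite_supp[OF zero_mono_in_Nmon] by (auto simp: pconst_def zero_mono_def)
  ultimately show ?thesis
    by simp
next
  case True
  let ?\<beta> = "\<lambda>i. \<gamma> i div 2"
  have "\<gamma> = ?\<beta> \<oplus> ?\<beta>"
    using True double_mono_iff[of ?\<beta> \<gamma>] by simp
  then have pconst: "pconst c \<gamma> = c * (if ?\<beta> = zero_mono then 1 else 0)"
    by (auto simp: pconst_def zero_mono_def fun_eq_iff)
  show ?thesis
  proof (cases "?\<beta> \<in> Nmon n k")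
    case True
    then show ?thesis
      using \<open>finite_supp \<gamma> \<and> (\<forall>i. even (\<gamma> i))\<close> pconst
      by (simp add: gram_poly_diagm ball_sos_coeff_def pmul_ball_poly_gram_diagm[OF e])
  next
    case False
    have "e ?\<beta> = 0"
      using False e Nmon_mono[OF \<open>d \<le> k\<close>] by blast
    moreover have "e (\<lambda>i. ?\<beta> i - mono_single j 1 i) = 0" if "j < n" for j
      using vanishing_minus_single[OF e _ False that] assms(3) that by auto
    moreover have "?\<beta> \<noteq> zero_mono"
      using False by auto
    ultimately show ?thesis
      using True False pconst
      by (simp add: gram_poly_diagm pmul_ball_poly_gram_diagm[OF e] sum.neutral)
  qed
qed

definition ball_mult_coeff :: "nat \<Rightarrow> nat \<Rightarrow> real \<Rightarrow> real \<Rightarrow> mono \<Rightarrow> real" where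
  "ball_mult_coeff n d R c \<beta> =
     (if \<beta> \<in> Nmon n d then c / (2 * R) * (1 / (2 * R)) ^ mdeg n \<beta> else 0)"

lemma ball_sos_coeff_pos:
  assumes R: "0 < R" and c: "0 < c" and \<beta>: "\<beta> \<in> Nmon n k" and "k \<le> Suc d"
  shows "0 < ball_sos_coeff n R c (ball_mult_coeff n d R c) \<beta>"
proof -
  define s where "s = c / (2 * R)"
  define l where "l = 1 / (2 * R)"
  let ?e = "ball_mult_coeff n d R c"
  have "0 < s" "0 < l" "R * l = 1 / 2" "R * s = c / 2"
    using R c by (simp_all add: s_def l_def)
  have e_nonneg: "0 \<le> ?e x" for x
    using \<open>0 < s\<close> \<open>0 < l\<close> by (simp add: ball_mult_coeff_def s_def[symmetric] l_def[symmetric])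
  have e_le: "?e x \<le> s * l ^ mdeg n x" for x
    using \<open>0 < s\<close> \<open>0 < l\<close> by (simp add: ball_mult_coeff_def s_def[symmetric] l_def[symmetric])
  show ?thesis
  proof (cases "\<beta> = zero_mono")
    case True
    then have "ball_sos_coeff n R c ?e \<beta> = c - R * s"
      by (simp add: ball_sos_coeff_def ball_mult_coeff_def s_def) (simp add: zero_mono_def)
    then show ?thesis
      using \<open>R * s = c / 2\<close> c by simp
  next
    case False
    obtain j where j: "j < n" "0 < \<beta> j"
      using Nmon_pos_coord[OF \<beta> False] .
    define \<beta>' where "\<beta>' = (\<lambda>i. \<beta> i - mono_single j 1 i)"
    have "\<beta>' \<in> Nmon n d"
      unfolding \<beta>'_def using Nmon_minus_single[of \<beta> n d j] \<beta> Nmon_mono[OF \<open>k \<le> Suc d\<close>] j by auto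
    have "mdeg n \<beta> = mdeg n \<beta>' + 1"
      unfolding \<beta>'_def using mdeg_minus_single[of j n \<beta>] j by blast
    have "R * ?e \<beta> \<le> R * (s * l ^ (mdeg n \<beta>' + 1))"
      using e_le[of \<beta>] R \<open>mdeg n \<beta> = mdeg n \<beta>' + 1\<close> by simp
    also have "\<dots> = s * l ^ mdeg n \<beta>' / 2"
      using \<open>R * l = 1 / 2\<close> by (simp add: algebra_simps)
    finally have "R * ?e \<beta> \<le> s * l ^ mdeg n \<beta>' / 2" .
    moreover have "s * l ^ mdeg n \<beta>' \<le> (\<Sum>j<n. if 1 \<le> \<beta> j then ?e (\<lambda>i. \<beta> i - mono_single j 1 i) else 0)"
    proof -
      have "s * l ^ mdeg n \<beta>' = (if 1 \<le> \<beta> j then ?e (\<lambda>i. \<beta> i - mono_single j 1 i) else 0)"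
        using \<open>\<beta>' \<in> Nmon n d\<close> j by (simp add: ball_mult_coeff_def \<beta>'_def s_def l_def)
      also have "\<dots> \<le> (\<Sum>j<n. if 1 \<le> \<beta> j then ?e (\<lambda>i. \<beta> i - mono_single j 1 i) else 0)"
        using j e_nonneg by (intro member_le_sum) auto
      finally show ?thesis .
    qed
    moreover have "0 < s * l ^ mdeg n \<beta>'"
      using \<open>0 < s\<close> \<open>0 < l\<close> by simp
    ultimately show ?thesis
      using False by (simp add: ball_sos_coeff_def)
  qed
qed

lemma ball_certificate:
  assumes R: "0 < R" and c: "0 < c" and k: "hdeg n (ball_poly n R) \<le> k"
  defines "d \<equiv> k - hdeg n (ball_poly n R)"
  shows "\<exists>a e. (\<forall>\<beta>\<in>Nmon n k. 0 < a \<beta>) \<and> (\<forall>\<beta>\<in>Nmon n d. 0 < e \<beta>) \<and>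
    (\<forall>\<gamma>. gram_poly n k (diagm a) \<gamma> + pmul (ball_poly n R) (gram_poly n d (diagm e)) \<gamma> = pconst c \<gamma>)"
proof (intro exI conjI)
  have "k \<le> Suc d" "d \<le> k" "0 < n \<Longrightarrow> d < k"
    using k hdeg_ball_poly[of n R] by (auto simp: d_def split: if_splits)
  then show "\<forall>\<gamma>. gram_poly n k (diagm (ball_sos_coeff n R c (ball_mult_coeff n d R c))) \<gamma> +
      pmul (ball_poly n R) (gram_poly n d (diagm (ball_mult_coeff n d R c))) \<gamma> = pconst c \<gamma>"
    by (intro allI ball_identity) (auto simp: ball_mult_coeff_def)
  show "\<forall>\<beta>\<in>Nmon n k. 0 < ball_sos_coeff n R c (ball_mult_coeff n d R c) \<beta>"
    using ball_sos_coeff_pos[OF R c _ \<open>k \<le> Suc d\<close>] by blast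
  show "\<forall>\<beta>\<in>Nmon n d. 0 < ball_mult_coeff n d R c \<beta>"
    using R c by (simp add: ball_mult_coeff_def)
qed

lemma trace_XMX_mat_sq:
  "trace_XMX n d X M = (\<Sum>\<beta>\<in>Nmon n d. \<Sum>\<gamma>\<in>Nmon n d. M \<beta> \<gamma> * mat_sq n d X \<gamma> \<beta>)"
proof -
  have "trace_XMX n d X M = (\<Sum>\<beta>\<in>Nmon n d. \<Sum>\<alpha>\<in>Nmon n d. \<Sum>\<gamma>\<in>Nmon n d. X \<alpha> \<beta> * M \<beta> \<gamma> * X \<gamma> \<alpha>)"
    unfolding trace_XMX_def by (rule sum.swap)
  also have "\<dots> = (\<Sum>\<beta>\<in>Nmon n d. \<Sum>\<gamma>\<in>Nmon n d. \<Sum>\<alpha>\<in>Nmon n d. X \<alpha> \<beta> * M \<beta> \<gamma> * X \<gamma> \<alpha>)"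
    by (intro sum.cong refl sum.swap)
  finally show ?thesis
    by (simp add: mat_sq_def sum_distrib_left mult_ac)
qed

lemma shifted_split_iff:
  "(\<forall>i. \<delta> i \<le> \<epsilon> i) \<and> \<alpha> \<oplus> \<beta> = (\<lambda>i. \<epsilon> i - \<delta> i) \<longleftrightarrow> \<epsilon> = \<delta> \<oplus> \<alpha> \<oplus> \<beta>"
  by (auto simp: fun_eq_iff) (metis add.assoc le_add_diff_inverse)+

text \<open>Both sides expand to the sum of q \<delta> * G \<alpha> \<beta> * y (\<delta> + \<alpha> + \<beta>) over \<delta> in the support
  of q and \<alpha>, \<beta> in N^n_d.\<close>
lemma loc_mat_pairing:
  assumes q: "is_poly n q" and D: "pdeg n q + 2 * d \<le> D"
  shows "(\<Sum>\<beta>\<in>Nmon n d. \<Sum>\<gamma>\<in>Nmon n d. loc_mat n q y \<beta> \<gamma> * G \<gamma> \<beta>) =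
    (\<Sum>\<epsilon>\<in>Nmon n D. pmul q (gram_poly n d G) \<epsilon> * y \<epsilon>)"
proof -
  let ?A = "Nmon n d" and ?F = "Nmon n D" and ?S = "{\<delta>. q \<delta> \<noteq> 0}"
  have fin_S: "finite ?S"
    by (rule is_poly_finite_supp[OF q])
  have in_F: "\<delta> \<oplus> \<alpha> \<oplus> \<beta> \<in> ?F" if "\<delta> \<in> ?S" "\<alpha> \<in> ?A" "\<beta> \<in> ?A" for \<delta> \<alpha> \<beta>
    using Nmon_add[OF Nmon_add[OF is_poly_supp_Nmon[OF q] that(2)] that(3)] that(1)
      Nmon_mono[of "pdeg n q + d + d" D n] D by auto
  have entry: "(if \<forall>i. \<delta> i \<le> \<epsilon> i then q \<delta> * gram_poly n d G (\<lambda>i. \<epsilon> i - \<delta> i) else 0) * y \<epsilon> =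
      (\<Sum>\<alpha>\<in>?A. \<Sum>\<beta>\<in>?A. if \<epsilon> = \<delta> \<oplus> \<alpha> \<oplus> \<beta> then q \<delta> * G \<alpha> \<beta> * y \<epsilon> else 0)" for \<delta> \<epsilon>
  proof (cases "\<forall>i. \<delta> i \<le> \<epsilon> i")
    case True
    then have "\<epsilon> = \<delta> \<oplus> \<alpha> \<oplus> \<beta> \<longleftrightarrow> \<alpha> \<oplus> \<beta> = (\<lambda>i. \<epsilon> i - \<delta> i)" for \<alpha> \<beta>
      using shifted_split_iff[of \<delta> \<epsilon> \<alpha> \<beta>] by simp
    then show ?thesis
      unfolding if_P[OF True] gram_poly_def sum_distrib_left sum_distrib_right
      by (intro sum.cong refl) simp
  next
    case False
    then have "\<epsilon> \<noteq> \<delta> \<oplus> \<alpha> \<oplus> \<beta>" for \<alpha> \<beta>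
      by auto
    then show ?thesis
      unfolding if_not_P[OF False] by simp
  qed
  have "(\<Sum>\<epsilon>\<in>?F. pmul q (gram_poly n d G) \<epsilon> * y \<epsilon>) =
      (\<Sum>\<epsilon>\<in>?F. \<Sum>\<delta>\<in>?S. \<Sum>\<alpha>\<in>?A. \<Sum>\<beta>\<in>?A. if \<epsilon> = \<delta> \<oplus> \<alpha> \<oplus> \<beta> then q \<delta> * G \<alpha> \<beta> * y \<epsilon> else 0)"
    using Nmon_finite_supp fin_S
    by (intro sum.cong refl) (simp add: pmul_eq_sum_supp sum_distrib_right entry)
  also have "\<dots> = (\<Sum>\<delta>\<in>?S. \<Sum>\<alpha>\<in>?A. \<Sum>\<beta>\<in>?A. \<Sum>\<epsilon>\<in>?F. if \<epsilon> = \<delta> \<oplus> \<alpha> \<oplus> \<beta> then q \<delta> * G \<alpha> \<beta> * y \<epsilon> else 0)"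
    by (subst sum.swap, rule sum.cong[OF refl], subst sum.swap, rule sum.cong[OF refl], rule sum.swap)
  also have "\<dots> = (\<Sum>\<delta>\<in>?S. \<Sum>\<alpha>\<in>?A. \<Sum>\<beta>\<in>?A. q \<delta> * G \<alpha> \<beta> * y (\<delta> \<oplus> \<alpha> \<oplus> \<beta>))"
    using in_F by (intro sum.cong refl) (simp add: finite_Nmon)
  also have "\<dots> = (\<Sum>\<alpha>\<in>?A. \<Sum>\<beta>\<in>?A. \<Sum>\<delta>\<in>?S. q \<delta> * G \<alpha> \<beta> * y (\<delta> \<oplus> \<alpha> \<oplus> \<beta>))"
    by (subst sum.swap, rule sum.cong[OF refl], rule sum.swap)
  also have "\<dots> = (\<Sum>\<beta>\<in>?A. \<Sum>\<alpha>\<in>?A. \<Sum>\<delta>\<in>?S. q \<delta> * G \<alpha> \<beta> * y (\<delta> \<oplus> \<alpha> \<oplus> \<beta>))"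
    by (rule sum.swap)
  also have "\<dots> = (\<Sum>\<beta>\<in>?A. \<Sum>\<gamma>\<in>?A. loc_mat n q y \<beta> \<gamma> * G \<gamma> \<beta>)"
    unfolding loc_mat_def sum_distrib_right by (simp add: add_ac mult_ac)
  finally show ?thesis
    by simp
qed

lemma is_poly_pconst: "is_poly n (pconst c)"
  by (auto simp: is_poly_def pconst_def intro!: exI[of _ 0])

lemma pdeg_pconst: "pdeg n (pconst c) = 0"
proof -
  have "{\<alpha>. pconst c \<alpha> \<noteq> 0} \<subseteq> {zero_mono}"
    by (auto simp: pconst_def)
  then show ?thesis
    unfolding pdeg_def by (metis (no_types, lifting) Max_singleton image_empty image_insert
      mdeg_zero_mono subset_singletonD)
qed

lemma mom_mat_eq_loc_mat: "mom_mat y = loc_mat n (pconst 1) y"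
proof -
  have "{\<gamma>. pconst 1 \<gamma> \<noteq> (0::real)} = {zero_mono}"
    by (auto simp: pconst_def)
  then show ?thesis
    by (simp add: mom_mat_def loc_mat_def pconst_def zero_mono_def)
qed

lemma pmul_pconst_one: "finite_supp \<gamma> \<Longrightarrow> pmul (pconst 1) q \<gamma> = q \<gamma>"
  by (subst pmul_eq_sum_supp[of _ "{zero_mono}"]) (auto simp: pconst_def zero_mono_def split: if_splits)

lemma mom_mat_pairing:
  assumes "2 * d \<le> D"
  shows "(\<Sum>\<beta>\<in>Nmon n d. \<Sum>\<gamma>\<in>Nmon n d. mom_mat y \<beta> \<gamma> * G \<gamma> \<beta>) =
    (\<Sum>\<epsilon>\<in>Nmon n D. gram_poly n d G \<epsilon> * y \<epsilon>)"
  using loc_mat_pairing[OF is_poly_pconst[of n 1], where d = d and D = D and y = y and G = G] assms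
  by (simp add: mom_mat_eq_loc_mat[of y n] pdeg_pconst pmul_pconst_one Nmon_finite_supp)

definition qmodule_poly ::
    "nat \<Rightarrow> nat \<Rightarrow> (nat \<Rightarrow> rpoly) \<Rightarrow> nat \<Rightarrow> (mono \<Rightarrow> mono \<Rightarrow> real) \<Rightarrow> (nat \<Rightarrow> mono \<Rightarrow> mono \<Rightarrow> real) \<Rightarrow> rpoly" where
  "qmodule_poly n m g k G0 G = (\<lambda>\<gamma>. gram_poly n k G0 \<gamma> +
     (\<Sum>i<m. pmul (g i) (gram_poly n (k - hdeg n (g i)) (G i)) \<gamma>))"

lemma trace_sum_eq_riesz:
  assumes polys: "\<forall>i<m. is_poly n (g i)" and k: "\<forall>i<m. hdeg n (g i) \<le> k"
  shows "trace_XMX n k X0 (mom_mat y) +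
      (\<Sum>i<m. trace_XMX n (k - hdeg n (g i)) (X i) (loc_mat n (g i) y)) =
    (\<Sum>\<epsilon>\<in>Nmon n (2 * k).
      qmodule_poly n m g k (mat_sq n k X0) (\<lambda>i. mat_sq n (k - hdeg n (g i)) (X i)) \<epsilon> * y \<epsilon>)"
proof -
  have "trace_XMX n (k - hdeg n (g i)) (X i) (loc_mat n (g i) y) =
      (\<Sum>\<epsilon>\<in>Nmon n (2 * k). pmul (g i) (gram_poly n (k - hdeg n (g i)) (mat_sq n (k - hdeg n (g i)) (X i))) \<epsilon> * y \<epsilon>)"
    if "i < m" for i
  proof -
    have "pdeg n (g i) + 2 * (k - hdeg n (g i)) \<le> 2 * k"
      using pdeg_plus_twice_le k that by blast
    then show ?thesis
      unfolding trace_XMX_mat_sq using polys that by (intro loc_mat_pairing) auto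
  qed
  then show ?thesis
    unfolding trace_XMX_mat_sq qmodule_poly_def mom_mat_pairing[OF order_refl]
    by (simp add: sum.swap[of _ "{..<m}"] sum.distrib distrib_right sum_distrib_right)
qed

lemma small_multiple:
  fixes f :: "'a \<Rightarrow> real"
  assumes "finite A" and "0 < \<epsilon>"
  obtains t where "0 < t" and "\<forall>x\<in>A. \<bar>t * f x\<bar> \<le> \<epsilon>"
proof -
  define M where "M = (\<Sum>x\<in>A. \<bar>f x\<bar>) + 1"
  have "0 < M"
    by (simp add: M_def add_nonneg_pos sum_nonneg)
  have "\<bar>\<epsilon> / M * f x\<bar> \<le> \<epsilon>" if "x \<in> A" for x
  proof -
    have "\<bar>f x\<bar> \<le> M"
      using assms(1) that member_le_sum[of x A "\<lambda>x. \<bar>f x\<bar>"] by (simp add: M_def)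
    then have "\<epsilon> / M * \<bar>f x\<bar> \<le> \<epsilon> / M * M"
      using assms(2) \<open>0 < M\<close> by (intro mult_left_mono) auto
    then show ?thesis
      using assms(2) \<open>0 < M\<close> by (simp add: abs_mult)
  qed
  then show thesis
    using that[of "\<epsilon> / M"] assms(2) \<open>0 < M\<close> by simp
qed

lemma pos_def_sqrt_near_diagonal:
  assumes a: "\<forall>\<beta>\<in>Nmon n k. 0 < a \<beta>" and E: "\<forall>\<alpha> \<beta>. E \<alpha> \<beta> = E \<beta> \<alpha>"
  shows "\<exists>t>0. \<exists>X. pos_def n k X \<and>
    (\<forall>\<alpha>\<in>Nmon n k. \<forall>\<beta>\<in>Nmon n k. mat_sq n k X \<alpha> \<beta> = diagm a \<alpha> \<beta> + t * E \<alpha> \<beta>)"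
proof -
  let ?A = "Nmon n k"
  obtain \<delta>a where "0 < \<delta>a" and \<delta>a: "\<forall>\<beta>\<in>?A. \<delta>a \<le> a \<beta>"
    using finite_pos_lower_bound[OF finite_Nmon a] .
  define \<delta> where "\<delta> = sqrt \<delta>a"
  define r where "r = \<delta> / (4 * real (card ?A))"
  define D where "D \<beta> = sqrt (a \<beta>)" for \<beta>
  have "0 < card ?A"
    using finite_Nmon[of n k] by (simp add: card_gt_0_iff)
  have "0 < \<delta>" "0 < \<delta> * r"
    using \<open>0 < \<delta>a\<close> \<open>0 < card ?A\<close> by (simp_all add: \<delta>_def r_def)
  have D: "\<forall>\<beta>\<in>?A. \<delta> \<le> D \<beta>"
    using \<delta>a by (simp add: \<delta>_def D_def)
  obtain t where "0 < t" and tE: "\<forall>p\<in>?A \<times> ?A. \<bar>t * case_prod E p\<bar> \<le> \<delta> * r"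
    using small_multiple[OF finite_cartesian_product[OF finite_Nmon finite_Nmon] \<open>0 < \<delta> * r\<close>] .
  obtain Z where Z: "\<forall>\<alpha>\<in>?A. \<forall>\<beta>\<in>?A. Z \<alpha> \<beta> = Z \<beta> \<alpha> \<and> \<bar>Z \<alpha> \<beta>\<bar> \<le> r \<and>
      (D \<alpha> + D \<beta>) * Z \<alpha> \<beta> + (\<Sum>\<gamma>\<in>?A. Z \<alpha> \<gamma> * Z \<gamma> \<beta>) = t * E \<alpha> \<beta>"
    using sqrt_near_diagonal[OF finite_Nmon _ \<open>0 < \<delta>\<close> D r_def, of "\<lambda>\<alpha> \<beta>. t * E \<alpha> \<beta>"] tE E
    by auto
  define X where "X \<alpha> \<beta> = diagm D \<alpha> \<beta> + Z \<alpha> \<beta>" for \<alpha> \<beta>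
  show ?thesis
  proof (intro exI conjI ballI)
    show "0 < t"
      by fact
    show "pos_def n k X"
    proof (rule pos_def_near_diagonal[OF _ D])
      show "\<forall>\<alpha>\<in>?A. \<forall>\<beta>\<in>?A. X \<alpha> \<beta> = X \<beta> \<alpha>"
        using Z by (auto simp: X_def diagm_def)
      show "\<forall>\<alpha>\<in>?A. \<forall>\<beta>\<in>?A. \<bar>X \<alpha> \<beta> - (if \<alpha> = \<beta> then D \<alpha> else 0)\<bar> \<le> r"
        using Z by (simp add: X_def diagm_def)
      show "r * real (card ?A) < \<delta>"
        using \<open>0 < card ?A\<close> \<open>0 < \<delta>\<close> by (simp add: r_def)
    qed
    fix \<alpha> \<beta> assume "\<alpha> \<in> ?A" "\<beta> \<in> ?A"
    moreover have "D \<alpha> * D \<alpha> = a \<alpha>"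
      using a \<open>\<alpha> \<in> ?A\<close> by (simp add: D_def less_imp_le)
    moreover have "(D \<alpha> + D \<beta>) * Z \<alpha> \<beta> + mat_sq n k Z \<alpha> \<beta> = t * E \<alpha> \<beta>"
      using Z \<open>\<alpha> \<in> ?A\<close> \<open>\<beta> \<in> ?A\<close> unfolding mat_sq_def by blast
    ultimately show "mat_sq n k X \<alpha> \<beta> = diagm a \<alpha> \<beta> + t * E \<alpha> \<beta>"
      unfolding X_def mat_sq_diag_plus[OF \<open>\<alpha> \<in> ?A\<close> \<open>\<beta> \<in> ?A\<close>]
      by (auto simp: diagm_def)
  qed
qed

lemma constraint_sum_gram_representation:
  assumes "finite I" and polys: "\<forall>i\<in>I. is_poly n (g i)" and k: "\<forall>i\<in>I. hdeg n (g i) \<le> k"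
  shows "\<exists>E. (\<forall>\<alpha> \<beta>. E \<alpha> \<beta> = E \<beta> \<alpha>) \<and> (\<forall>t \<gamma>.
    (\<Sum>i\<in>I. pmul (g i) (gram_poly n (k - hdeg n (g i)) (diagm (\<lambda>_. t))) \<gamma>) = t * gram_poly n k E \<gamma>)"
proof -
  define q where "q \<gamma> = (\<Sum>i\<in>I. pmul (g i) (gram_poly n (k - hdeg n (g i)) (diagm (\<lambda>_. 1))) \<gamma>)" for \<gamma>
  have "\<gamma> \<in> Nmon n (2 * k)" if "q \<gamma> \<noteq> 0" for \<gamma>
  proof -
    obtain i where "i \<in> I" and "pmul (g i) (gram_poly n (k - hdeg n (g i)) (diagm (\<lambda>_. 1))) \<gamma> \<noteq> 0"
      using \<open>q \<gamma> \<noteq> 0\<close> unfolding q_def by (rule sum.not_neutral_contains_not_neutral)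
    then have "\<gamma> \<in> Nmon n (pdeg n (g i) + 2 * (k - hdeg n (g i)))"
      using polys by (intro pmul_gram_poly_supp) auto
    moreover have "pdeg n (g i) + 2 * (k - hdeg n (g i)) \<le> 2 * k"
      using k \<open>i \<in> I\<close> by (intro pdeg_plus_twice_le) auto
    ultimately show ?thesis
      using Nmon_mono by blast
  qed
  then obtain E where "\<forall>\<alpha> \<beta>. E \<alpha> \<beta> = E \<beta> \<alpha>" and "gram_poly n k E = q"
    using gram_poly_exists[of q n k] by blast
  moreover have "(\<Sum>i\<in>I. pmul (g i) (gram_poly n (k - hdeg n (g i)) (diagm (\<lambda>_. t))) \<gamma>) = t * q \<gamma>"
    for t \<gamma>
    by (simp add: q_def gram_poly_diagm_const[of n _ t] pmul_scale_right sum_distrib_left)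
  ultimately show ?thesis
    by auto
qed

lemma positive_constant_certificate:
  assumes polys: "\<forall>i<m. is_poly n (g i)" and R: "0 < R"
    and i0: "i0 < m" "g i0 = ball_poly n R" and k: "\<forall>i<m. hdeg n (g i) \<le> k" and c: "0 < c"
  shows "\<exists>X0 X. pos_def n k X0 \<and> (\<forall>i<m. pos_def n (k - hdeg n (g i)) (X i)) \<and>
    qmodule_poly n m g k (mat_sq n k X0) (\<lambda>i. mat_sq n (k - hdeg n (g i)) (X i)) = pconst c"
proof -
  let ?d = "\<lambda>i. k - hdeg n (g i)"
  define I where "I = {..<m} - {i0}"
  have "hdeg n (g i0) \<le> k"
    using k i0(1) by blast
  then obtain a e where a: "\<forall>\<beta>\<in>Nmon n k. 0 < a \<beta>" and e: "\<forall>\<beta>\<in>Nmon n (?d i0). 0 < e \<beta>"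
    and ball: "\<And>\<gamma>. gram_poly n k (diagm a) \<gamma> + pmul (g i0) (gram_poly n (?d i0) (diagm e)) \<gamma> = pconst c \<gamma>"
    using ball_certificate[OF R c, of n k] unfolding i0(2) by blast
  obtain E where "\<forall>\<alpha> \<beta>. E \<alpha> \<beta> = E \<beta> \<alpha>" and E: "\<And>t \<gamma>.
      (\<Sum>i\<in>I. pmul (g i) (gram_poly n (?d i) (diagm (\<lambda>_. t))) \<gamma>) = t * gram_poly n k E \<gamma>"
    using constraint_sum_gram_representation[of I n g k] polys k by (auto simp: I_def)
  then have "\<forall>\<alpha> \<beta>. - E \<alpha> \<beta> = - E \<beta> \<alpha>"
    by simp
  then obtain t X0 where "0 < t" and X0: "pos_def n k X0"
    and sq_X0: "\<forall>\<alpha>\<in>Nmon n k. \<forall>\<beta>\<in>Nmon n k. mat_sq n k X0 \<alpha> \<beta> = diagm a \<alpha> \<beta> + t * - E \<alpha> \<beta>"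
    using pos_def_sqrt_near_diagonal[OF a, of "\<lambda>\<alpha> \<beta>. - E \<alpha> \<beta>"] by blast
  define X where "X i = (if i = i0 then diagm (\<lambda>\<beta>. sqrt (e \<beta>)) else diagm (\<lambda>_. sqrt t))" for i
  have "gram_poly n k (mat_sq n k X0) = gram_poly n k (\<lambda>\<alpha> \<beta>. diagm a \<alpha> \<beta> + (- t) * E \<alpha> \<beta>)"
    using sq_X0 by (intro gram_poly_cong) simp
  then have gram_X0: "gram_poly n k (mat_sq n k X0) \<gamma> = gram_poly n k (diagm a) \<gamma> - t * gram_poly n k E \<gamma>"
    for \<gamma>
    using gram_poly_lincomb[of n k "diagm a" "- t" E \<gamma>] by simp
  have "gram_poly n (?d i0) (mat_sq n (?d i0) (X i0)) = gram_poly n (?d i0) (diagm e)"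
    using e by (intro gram_poly_cong) (simp add: X_def mat_sq_diagm, auto simp: diagm_def)
  moreover have "gram_poly n (?d i) (mat_sq n (?d i) (X i)) = gram_poly n (?d i) (diagm (\<lambda>_. t))"
    if "i \<noteq> i0" for i
    using that \<open>0 < t\<close> by (intro gram_poly_cong) (simp add: X_def mat_sq_diagm)
  ultimately have "(\<Sum>i<m. pmul (g i) (gram_poly n (?d i) (mat_sq n (?d i) (X i))) \<gamma>) =
      pmul (g i0) (gram_poly n (?d i0) (diagm e)) \<gamma> + t * gram_poly n k E \<gamma>" for \<gamma>
    using \<open>i0 < m\<close> E[of t \<gamma>, symmetric] by (simp add: sum.remove[of _ i0] I_def)
  then have "qmodule_poly n m g k (mat_sq n k X0) (\<lambda>i. mat_sq n (?d i) (X i)) \<gamma> = pconst c \<gamma>" for \<gamma>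
    unfolding qmodule_poly_def gram_X0 using ball[of \<gamma>] by simp
  moreover have "\<forall>i<m. pos_def n (?d i) (X i)"
    using e \<open>0 < t\<close> by (auto simp: X_def intro!: pos_def_diagm)
  ultimately show ?thesis
    using X0 by blast
qed

lemma hdeg_le_kmin: "kmin n f m g l h \<le> k \<Longrightarrow> \<forall>i<m. hdeg n (g i) \<le> k"
  by (auto simp: kmin_def intro: order_trans[OF Max_ge])

lemma qmodule_poly_mat_sq_in_Qcirc:
  assumes "pos_def n k X0" and "\<forall>i<m. pos_def n (k - hdeg n (g i)) (X i)"
  shows "qmodule_poly n m g k (mat_sq n k X0) (\<lambda>i. mat_sq n (k - hdeg n (g i)) (X i)) \<in> Qcirc n m g k"
  unfolding Qcirc_def qmodule_poly_def using assms
  by (intro CollectI exI[of _ "mat_sq n k X0"] exI[of _ "\<lambda>i. mat_sq n (k - hdeg n (g i)) (X i)"])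
    (simp add: pos_def_mat_sq)

lemma CTP_of_unit_certificate:
  assumes polys: "\<forall>i<m. is_poly n (g i)"
    and cert: "\<And>k. kmin n f m g l h \<le> k \<Longrightarrow> \<exists>X0 X. pos_def n k X0 \<and>
      (\<forall>i<m. pos_def n (k - hdeg n (g i)) (X i)) \<and>
      qmodule_poly n m g k (mat_sq n k X0) (\<lambda>i. mat_sq n (k - hdeg n (g i)) (X i)) = pconst 1"
  shows "CTP n f m g l h"
  unfolding CTP_def
proof (intro allI impI)
  fix k assume k: "kmin n f m g l h \<le> k"
  then obtain X0 X where pd: "pos_def n k X0" "\<forall>i<m. pos_def n (k - hdeg n (g i)) (X i)"
    and one: "qmodule_poly n m g k (mat_sq n k X0) (\<lambda>i. mat_sq n (k - hdeg n (g i)) (X i)) = pconst 1"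
    using cert by blast
  have "trace_XMX n k X0 (mom_mat y) +
      (\<Sum>i<m. trace_XMX n (k - hdeg n (g i)) (X i) (loc_mat n (g i) y)) = y zero_mono" for y
    unfolding trace_sum_eq_riesz[OF polys hdeg_le_kmin[OF k]] one
    by (simp add: pconst_def finite_Nmon if_distrib[of "\<lambda>x. x * _"] cong: if_cong)
  then show "\<exists>a>0. \<exists>X0 X. pos_def n k X0 \<and> (\<forall>i<m. pos_def n (k - hdeg n (g i)) (X i)) \<and>
      (\<forall>y. (\<forall>j<l. \<forall>\<alpha>\<in>Nmon n (k - hdeg n (h j)). \<forall>\<beta>\<in>Nmon n (k - hdeg n (h j)).
          loc_mat n (h j) y \<alpha> \<beta> = 0) \<and> y zero_mono = 1 \<longrightarrow>
        trace_XMX n k X0 (mom_mat y) +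
        (\<Sum>i<m. trace_XMX n (k - hdeg n (g i)) (X i) (loc_mat n (g i) y)) = a)"
    using pd by (intro exI[of _ 1] conjI exI[of _ X0] exI[of _ X]) auto
qed

theorem theorem2:
  fixes n m l :: nat and f :: rpoly and g h :: "nat \<Rightarrow> rpoly" and R :: real
  assumes "is_poly n f"
    and "\<forall>i<m. is_poly n (g i)"
    and "\<forall>j<l. is_poly n (h j)"
    and "R > 0"
    and "\<exists>i<m. g i = ball_poly n R"
  shows "(\<forall>k\<ge>kmin n f m g l h. \<forall>c::real. c > 0 \<longrightarrow> pconst c \<in> Qcirc n m g k)
         \<and> CTP n f m g l h"
proof -
  obtain i0 where i0: "i0 < m" "g i0 = ball_poly n R"
    using assms(5) by blast
  have certificate: "\<exists>X0 X. pos_def n k X0 \<and> (\<forall>i<m. pos_def n (k - hdeg n (g i)) (X i)) \<and>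
      qmodule_poly n m g k (mat_sq n k X0) (\<lambda>i. mat_sq n (k - hdeg n (g i)) (X i)) = pconst c"
    if "kmin n f m g l h \<le> k" and "0 < c" for k c
    using positive_constant_certificate[OF assms(2,4) i0 hdeg_le_kmin[OF that(1)] that(2)] .
  have "pconst c \<in> Qcirc n m g k" if k: "kmin n f m g l h \<le> k" and c: "0 < c" for k c
  proof -
    obtain X0 X where "pos_def n k X0" and "\<forall>i<m. pos_def n (k - hdeg n (g i)) (X i)"
      and "qmodule_poly n m g k (mat_sq n k X0) (\<lambda>i. mat_sq n (k - hdeg n (g i)) (X i)) = pconst c"
      using certificate[OF k c] by blast
    then show ?thesis
      using qmodule_poly_mat_sq_in_Qcirc[of n k X0 m g X] by simp
  qed
  moreover have "CTP n f m g l h"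
    using certificate[of _ 1] by (intro CTP_of_unit_certificate[OF assms(2)]) simp
  ultimately show ?thesis
    by blast
qed

end
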